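(* Let $V$ be a countable set and $(N_t(i),t\ge0)_{i\in V}$ be i.i.d. continuous-time birth and death processes with individual birth rate $r$ and individual death rate $q<r$, each started from $N_0(i)=1$. Then there exist $\delta>0$ and a nonnegative nonincreasing function $G$ on $\mathbb R_+$ with $G(y)\to0$ as $y\to\infty$ such that for all finite subsets $J\subset I\subset V$ (with $J\ne\emptyset$) and all $x\ge0$, $$\mathbb P\Big(\sup_{t\ge0}\mathbf 1_{\{\sum_{i\in I}N_t(i)>0\}}\frac{\sum_{i\in J}N_t(i)}{\sum_{i\in I}N_t(i)}\ge x\Big)\le G\Big(\frac{\#I}{\#J}x\Big)+e^{-2\delta\#I}.$$ *)

theory Defs
  imports "HOL-Probability.Probability"
begin

definition bd_rate :: "real \<Rightarrow> real \<Rightarrow> nat \<Rightarrow> nat \<Rightarrow> real" where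
  "bd_rate r q n m =
     (if m = Suc n then r * real n
      else if Suc m = n then q * real n
      else if m = n then - (r + q) * real n
      else 0)"

text \<open>Since the linear
  birth and death process is non-explosive, such a p is unique (it is the minimal
  solution, which is honest), i.e. it is the transition function of the process.\<close>
definition is_bd_transition :: "real \<Rightarrow> real \<Rightarrow> (real \<Rightarrow> nat \<Rightarrow> nat \<Rightarrow> real) \<Rightarrow> bool" where
  "is_bd_transition r q p \<longleftrightarrow>
     (\<forall>t\<ge>0. \<forall>n m. p t n m \<ge> 0) \<and>
     (\<forall>t\<ge>0. \<forall>n. summable (p t n) \<and> suminf (p t n) \<le> 1) \<and>
     (\<forall>n m. p 0 n m = (if n = m then 1 else 0)) \<and>
     (\<forall>t\<ge>0. \<forall>n m. ((\<lambda>s. p s n m) has_real_derivative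
                        (\<Sum>k\<le>Suc n. bd_rate r q n k * p t k m)) (at t within {0..}))"

definition iid_bd_family ::
  "'w measure \<Rightarrow> 'v set \<Rightarrow> ('v \<Rightarrow> real \<Rightarrow> 'w \<Rightarrow> nat) \<Rightarrow> (real \<Rightarrow> nat \<Rightarrow> nat \<Rightarrow> real) \<Rightarrow> bool" where
  "iid_bd_family M V N p \<longleftrightarrow>
     (\<forall>F ts k m. finite F \<longrightarrow> F \<subseteq> V \<longrightarrow> ts 0 = 0 \<longrightarrow> (\<forall>j<k. ts j < ts (Suc j)) \<longrightarrow>
        measure M {\<omega>\<in>space M. \<forall>i\<in>F. \<forall>j\<le>k. N i (ts j) \<omega> = m i j}
        = (\<Prod>i\<in>F. (if m i 0 = 1 then 1 else 0) *
                    (\<Prod>j<k. p (ts (Suc j) - ts j) (m i j) (m i (Suc j)))))"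

definition bd_ratio :: "('v \<Rightarrow> real \<Rightarrow> 'w \<Rightarrow> nat) \<Rightarrow> 'v set \<Rightarrow> 'v set \<Rightarrow> real \<Rightarrow> 'w \<Rightarrow> real" where
  "bd_ratio N I J t \<omega> =
     (if (\<Sum>i\<in>I. N i t \<omega>) > 0
      then real (\<Sum>i\<in>J. N i t \<omega>) / real (\<Sum>i\<in>I. N i t \<omega>) else 0)"

end

theory Submission
  imports Defs
begin

text \<open>
  Along a finite grid of times, the populations of the colonies \<open>i \<in> I\<close> form a Markov chain,
  and the mass ratio \<open>R t = (\<Sum>i\<in>J. N i t) / (\<Sum>i\<in>I. N i t)\<close> is a supermartingale: by the
  branching property each colony is a sum of independent single-individual processes, and by
  exchangeability each of the \<open>n\<close> individuals alive at a given time expects a share of at most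
  \<open>1 / n\<close> of the later population. Optional stopping gives the maximal inequality
  \<open>P (max R \<ge> c) \<le> R 0 / c = card J / (card I * c)\<close>, which passes to the supremum over all
  times through the rational times and right-continuity.

  The branching property, \<open>p t (u + v)\<close> being the convolution of \<open>p t u\<close> and \<open>p t v\<close>, comes
  from the backward equations: the generating function of \<open>p t n\<close> and the \<open>n\<close>-th power of the
  explicit solution of the associated Riccati equation both solve them, and bounded solutions
  are unique by a weighted energy estimate.
\<close>

lemma nonpos_derivative_imp_le_initial:
  fixes f f' :: "real \<Rightarrow> real"
  assumes "\<And>x. x \<ge> 0 \<Longrightarrow> (f has_real_derivative f' x) (at x within {0..})"
    and "\<And>x. x \<ge> 0 \<Longrightarrow> f' x \<le> 0" and "0 \<le> t"
  shows "f t \<le> f 0"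
proof -
  have "\<exists>x\<in>{0..t}. f t - f 0 = f' x * (t - 0)"
  proof (rule mvt_very_simple)
    fix x assume "0 \<le> x" "x \<le> t"
    then show "(f has_derivative (\<lambda>h. f' x * h)) (at x within {0..t})"
      using assms(1)[of x] unfolding has_field_derivative_def
      by (meson atLeastAtMost_iff atLeast_iff has_derivative_subset subsetI)
  qed (use assms in auto)
  then obtain x where "x \<in> {0..t}" "f t - f 0 = f' x * t" by auto
  moreover have "f' x \<le> 0" using assms(2) \<open>x \<in> {0..t}\<close> by auto
  ultimately show ?thesis using \<open>0 \<le> t\<close> mult_nonpos_nonneg[of "f' x" t] by linarith
qed

lemma gronwall_linear:
  fixes f f' :: "real \<Rightarrow> real"
  assumes "\<And>s. s \<ge> 0 \<Longrightarrow> (f has_real_derivative f' s) (at s within {0..})"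
    and "\<And>s. s \<ge> 0 \<Longrightarrow> f' s \<le> a * (f s + C)" and "0 \<le> t"
  shows "f t + C \<le> exp (a * t) * (f 0 + C)"
proof -
  define g where "g s = exp (- (a * s)) * (f s + C)" for s
  have "g t \<le> g 0"
  proof (rule nonpos_derivative_imp_le_initial[OF _ _ \<open>0 \<le> t\<close>])
    fix s :: real assume s: "s \<ge> 0"
    show "(g has_real_derivative exp (- (a * s)) * (f' s - a * (f s + C))) (at s within {0..})"
      unfolding g_def by (rule derivative_eq_intros assms(1)[OF s] refl)+ (simp add: algebra_simps)
    show "exp (- (a * s)) * (f' s - a * (f s + C)) \<le> 0"
      using assms(2)[OF s] by (simp add: mult_nonneg_nonpos)
  qed
  then show ?thesis unfolding g_def by (simp add: exp_minus field_simps)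
qed

lemma has_real_derivative_suminf_dominated:
  fixes f f' :: "nat \<Rightarrow> real \<Rightarrow> real"
  assumes "convex S" "t \<in> S"
    and "\<And>m x. x \<in> S \<Longrightarrow> (f m has_real_derivative f' m x) (at x within S)"
    and "\<And>m x. x \<in> S \<Longrightarrow> \<bar>f' m x\<bar> \<le> C m" "summable C"
    and "\<And>x. x \<in> S \<Longrightarrow> summable (\<lambda>m. f m x)"
  shows "((\<lambda>x. \<Sum>m. f m x) has_real_derivative (\<Sum>m. f' m t)) (at t within S)"
proof -
  have "uniform_limit S (\<lambda>N x. \<Sum>m<N. f' m x) (\<lambda>x. \<Sum>m. f' m x) sequentially"
    using assms(4,5) by (intro Weierstrass_m_test) auto
  from has_field_derivative_series[OF assms(1,3) this assms(2) assms(6)[OF assms(2)]]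
  obtain g where g: "\<And>x. x \<in> S \<Longrightarrow> (\<lambda>m. f m x) sums g x \<and> (g has_real_derivative (\<Sum>m. f' m x)) (at x within S)"
    by blast
  then have "(g has_real_derivative (\<Sum>m. f' m t)) (at t within S)" using assms(2) by blast
  then show ?thesis
    by (rule has_field_derivative_transform_within[where d=1]) (use assms(2) g in \<open>auto simp: sums_iff\<close>)
qed

lemma powser_bounded_coeffs_eq_0:
  fixes d :: "nat \<Rightarrow> real"
  assumes bounded: "\<And>m. \<bar>d m\<bar> \<le> B"
    and zero: "\<And>z. 0 < z \<Longrightarrow> z < 1 \<Longrightarrow> (\<Sum>m. d m * z ^ m) = 0"
  shows "d m = 0"
proof (induction m rule: less_induct)
  case (less m)
  have summable: "summable (\<lambda>j. f j * x ^ j)" if "\<bar>x\<bar> < 1" "\<And>j. \<bar>f j\<bar> \<le> B" for x :: real and f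
  proof (rule summable_comparison_test'[where g="\<lambda>j. B * \<bar>x\<bar> ^ j"])
    show "summable (\<lambda>j. B * \<bar>x\<bar> ^ j)" using that by (intro summable_mult summable_geometric) auto
    show "norm (f j * x ^ j) \<le> B * \<bar>x\<bar> ^ j" for j
      using that(2)[of j] by (simp add: abs_mult power_abs mult_right_mono)
  qed
  define e where "e j = d (j + m)" for j
  define f where "f x = (\<Sum>j. e j * x ^ j)" for x :: real
  have "f x = 0" if x: "0 < x" "x < 1" for x
  proof -
    have "0 = (\<Sum>j. d j * x ^ j)" using zero[OF x] by simp
    also have "\<dots> = (\<Sum>j. d (j + m) * x ^ (j + m)) + (\<Sum>j<m. d j * x ^ j)"
      by (rule suminf_split_initial_segment) (use x bounded in \<open>intro summable; auto\<close>)
    also have "(\<Sum>j<m. d j * x ^ j) = 0" using less by simp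
    also have "(\<Sum>j. d (j + m) * x ^ (j + m)) = (\<Sum>j. x ^ m * (e j * x ^ j))"
      unfolding e_def by (simp add: power_add mult_ac)
    also have "\<dots> = x ^ m * f x"
      unfolding f_def by (rule suminf_mult) (use x bounded in \<open>unfold e_def; intro summable; auto\<close>)
    finally show ?thesis using x by simp
  qed
  then have "eventually (\<lambda>x. f x = 0) (at_right 0)"
    unfolding eventually_at_right[OF zero_less_one] by (intro exI[of _ 1]) auto
  then have lim_0: "(f \<longlongrightarrow> 0) (at_right 0)" by (rule tendsto_eventually)
  have lim_e0: "(f \<longlongrightarrow> e 0) (at_right 0)"
  proof (rule tendsto_within_subset[OF _ subset_UNIV], rule powser_limit_0[where s=1])
    show "(\<lambda>j. e j * x ^ j) sums f x" if "norm x < 1" for x :: real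
      unfolding f_def using that bounded unfolding e_def by (intro summable_sums summable) auto
  qed simp
  have "e 0 = 0" using tendsto_unique[OF _ lim_e0 lim_0] by simp
  then show ?case unfolding e_def by simp
qed

section \<open>Uniqueness for the backward equations\<close>

lemma backward_energy_term:
  fixes k r q x y z :: real
  assumes "k > 0" "0 \<le> q" "0 \<le> r"
  shows "2 * y * (k * (r * z - (r + q) * y + q * x)) / (k * (k + 1))
    \<le> r * y\<^sup>2 / (k * (k + 1)) + r * (z\<^sup>2 / (k + 1) - y\<^sup>2 / k) + q * (x\<^sup>2 / k - y\<^sup>2 / (k + 1))"
proof -
  have "k + 1 \<noteq> 0" "k \<noteq> 0" using assms by auto
  then have "r * y\<^sup>2 / (k * (k + 1)) + r * (z\<^sup>2 / (k + 1) - y\<^sup>2 / k) + q * (x\<^sup>2 / k - y\<^sup>2 / (k + 1))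
      - 2 * y * (k * (r * z - (r + q) * y + q * x)) / (k * (k + 1))
      = (r * (z - y)\<^sup>2 + q * (x - y)\<^sup>2) / (k + 1) + q * x\<^sup>2 / (k * (k + 1))"
    by (simp add: divide_simps) (simp add: power2_eq_square algebra_simps)
  moreover have "0 \<le> (r * (z - y)\<^sup>2 + q * (x - y)\<^sup>2) / (k + 1) + q * x\<^sup>2 / (k * (k + 1))"
    using assms by (intro add_nonneg_nonneg divide_nonneg_nonneg mult_nonneg_nonneg) auto
  ultimately show ?thesis by linarith
qed

text \<open>With the weights \<open>1 / (j (j + 1))\<close> the birth and death parts of the quadratic form
  telescope, so the backward operator is dissipative up to a boundary term at level \<open>N + 1\<close>.\<close>
lemma backward_energy_ineq:
  fixes d :: "nat \<Rightarrow> real"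
  assumes "d 0 = 0" "0 \<le> q" "0 \<le> r"
  shows "(\<Sum>j=1..N. 2 * d j * (real j * (r * d (Suc j) - (r + q) * d j + q * d (j - 1))) / (real j * (real j + 1)))
    \<le> r * (\<Sum>j=1..N. (d j)\<^sup>2 / (real j * (real j + 1))) + r * ((d (Suc N))\<^sup>2 / real (Suc N))"
proof -
  define T where "T j = (d j)\<^sup>2 / real j" for j
  define U where "U j = (d j)\<^sup>2 / (real j + 1)" for j
  have "(\<Sum>j=1..N. 2 * d j * (real j * (r * d (Suc j) - (r + q) * d j + q * d (j - 1))) / (real j * (real j + 1)))
      \<le> (\<Sum>j=1..N. r * (d j)\<^sup>2 / (real j * (real j + 1)) + r * (T (Suc j) - T j) + q * (U (j - 1) - U j))"
  proof (rule sum_mono)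
    fix j assume "j \<in> {1..N}"
    then have j: "real j > 0" and "real (j - 1) + 1 = real j" "real (Suc j) = real j + 1"
      by (auto simp: of_nat_diff)
    from backward_energy_term[where k="real j" and x="d (j - 1)" and y="d j" and z="d (Suc j)", OF j assms(2,3)]
    show "2 * d j * (real j * (r * d (Suc j) - (r + q) * d j + q * d (j - 1))) / (real j * (real j + 1))
        \<le> r * (d j)\<^sup>2 / (real j * (real j + 1)) + r * (T (Suc j) - T j) + q * (U (j - 1) - U j)"
      unfolding T_def U_def \<open>real (j - 1) + 1 = real j\<close> \<open>real (Suc j) = real j + 1\<close> .
  qed
  also have "\<dots> = r * (\<Sum>j=1..N. (d j)\<^sup>2 / (real j * (real j + 1)))
      + r * (\<Sum>j=1..N. T (Suc j) - T j) + q * (\<Sum>j=1..N. U (j - 1) - U j)"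
    by (simp add: sum.distrib sum_distrib_left)
  also have "(\<Sum>j=1..N. T (Suc j) - T j) = T (Suc N) - T 1"
    by (rule sum_Suc_diff) simp
  also have "(\<Sum>j=1..N. U (j - 1) - U j) = U 0 - U N"
    by (induction N) (auto simp: Suc_le_eq)
  also have "U 0 = 0" unfolding U_def using assms(1) by simp
  finally have "(\<Sum>j=1..N. 2 * d j * (real j * (r * d (Suc j) - (r + q) * d j + q * d (j - 1))) / (real j * (real j + 1)))
    \<le> r * (\<Sum>j=1..N. (d j)\<^sup>2 / (real j * (real j + 1))) + r * (T (Suc N) - T 1) + q * (0 - U N)" .
  moreover have "0 \<le> r * T 1" "0 \<le> q * U N" using assms(2,3) unfolding T_def U_def by simp_all
  ultimately show ?thesis unfolding T_def by (simp add: algebra_simps)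
qed

lemma backward_energy_bound:
  fixes D :: "real \<Rightarrow> nat \<Rightarrow> real"
  assumes "0 \<le> q" "0 \<le> r"
    and bounded: "\<And>t n. t \<ge> 0 \<Longrightarrow> \<bar>D t n\<bar> \<le> B"
    and initial: "\<And>n. D 0 n = 0"
    and absorbing: "\<And>t. t \<ge> 0 \<Longrightarrow> D t 0 = 0"
    and backward: "\<And>t n. t \<ge> 0 \<Longrightarrow> ((\<lambda>s. D s n) has_real_derivative
          real n * (r * D t (Suc n) - (r + q) * D t n + q * D t (n - 1))) (at t within {0..})"
    and "t \<ge> 0"
  shows "(\<Sum>j=1..N. (D t j)\<^sup>2 / (real j * (real j + 1))) \<le> exp (r * t) * (B\<^sup>2 / real (Suc N))"
proof -
  define \<Phi> where "\<Phi> s = (\<Sum>j=1..N. (D s j)\<^sup>2 / (real j * (real j + 1)))" for s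
  have "\<Phi> 0 = 0" unfolding \<Phi>_def using initial by simp
  have "\<Phi> t + B\<^sup>2 / real (Suc N) \<le> exp (r * t) * (\<Phi> 0 + B\<^sup>2 / real (Suc N))"
  proof (rule gronwall_linear[OF _ _ \<open>t \<ge> 0\<close>])
    fix s :: real assume s: "s \<ge> 0"
    show "(\<Phi> has_real_derivative (\<Sum>j=1..N. 2 * D s j *
        (real j * (r * D s (Suc j) - (r + q) * D s j + q * D s (j - 1))) / (real j * (real j + 1))))
        (at s within {0..})"
      unfolding \<Phi>_def
    proof (rule DERIV_sum)
      fix j assume "j \<in> {1..N}"
      show "((\<lambda>s. (D s j)\<^sup>2 / (real j * (real j + 1))) has_real_derivative 2 * D s j *
          (real j * (r * D s (Suc j) - (r + q) * D s j + q * D s (j - 1))) / (real j * (real j + 1)))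
          (at s within {0..})"
        using DERIV_cdivide[OF DERIV_power[OF backward[OF s, of j], of 2], of "real j * (real j + 1)"]
          \<open>j \<in> {1..N}\<close> by (simp add: ac_simps)
    qed
    have "(D s (Suc N))\<^sup>2 \<le> B\<^sup>2"
      using bounded[OF s, of "Suc N"] by (meson abs_ge_zero order_trans power2_le_iff_abs_le)
    then have "r * ((D s (Suc N))\<^sup>2 / real (Suc N)) \<le> r * (B\<^sup>2 / real (Suc N))"
      using \<open>0 \<le> r\<close> by (simp add: divide_right_mono mult_left_mono)
    then show "(\<Sum>j=1..N. 2 * D s j * (real j * (r * D s (Suc j) - (r + q) * D s j + q * D s (j - 1)))
        / (real j * (real j + 1))) \<le> r * (\<Phi> s + B\<^sup>2 / real (Suc N))"
      using backward_energy_ineq[of "D s" q r N] absorbing[OF s] assms(1,2)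
      unfolding \<Phi>_def by (simp add: distrib_left)
  qed
  moreover have "0 \<le> B\<^sup>2 / real (Suc N)" by simp
  ultimately show ?thesis unfolding \<Phi>_def[symmetric] \<open>\<Phi> 0 = 0\<close> add_0_left by linarith
qed

lemma backward_equation_unique:
  fixes D :: "real \<Rightarrow> nat \<Rightarrow> real"
  assumes "0 \<le> q" "0 \<le> r"
    and bounded: "\<And>t n. t \<ge> 0 \<Longrightarrow> \<bar>D t n\<bar> \<le> B"
    and initial: "\<And>n. D 0 n = 0"
    and absorbing: "\<And>t. t \<ge> 0 \<Longrightarrow> D t 0 = 0"
    and backward: "\<And>t n. t \<ge> 0 \<Longrightarrow> ((\<lambda>s. D s n) has_real_derivative
          real n * (r * D t (Suc n) - (r + q) * D t n + q * D t (n - 1))) (at t within {0..})"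
    and "t \<ge> 0"
  shows "D t n = 0"
proof (cases n)
  case (Suc n')
  have "(D t n)\<^sup>2 / (real n * (real n + 1)) \<le> 0"
  proof (rule LIMSEQ_le_const)
    show "(\<lambda>N. exp (r * t) * (B\<^sup>2 / real (Suc N))) \<longlonglongrightarrow> 0"
      using tendsto_mult_right_zero[OF LIMSEQ_Suc[OF lim_const_over_n[of "B\<^sup>2"]]] by simp
    show "\<exists>N0. \<forall>N\<ge>N0. (D t n)\<^sup>2 / (real n * (real n + 1)) \<le> exp (r * t) * (B\<^sup>2 / real (Suc N))"
    proof (intro exI allI impI)
      fix N assume "n \<le> N"
      then have "(D t n)\<^sup>2 / (real n * (real n + 1)) \<le> (\<Sum>j=1..N. (D t j)\<^sup>2 / (real j * (real j + 1)))"
        using Suc by (intro member_le_sum) auto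
      with backward_energy_bound[OF assms, of N]
      show "(D t n)\<^sup>2 / (real n * (real n + 1)) \<le> exp (r * t) * (B\<^sup>2 / real (Suc N))"
        by linarith
    qed
  qed
  then show ?thesis using Suc by (auto simp: divide_le_0_iff mult_le_0_iff)
qed (use absorbing \<open>t \<ge> 0\<close> in simp)

lemma bd_rate_sum:
  "(\<Sum>k\<le>Suc n. bd_rate r q n k * f k) = real n * (r * f (Suc n) - (r + q) * f n + q * f (n - 1))"
proof (cases n)
  case (Suc m)
  have "(\<Sum>k<m. bd_rate r q n k * f k) = 0"
    by (rule sum.neutral) (auto simp: bd_rate_def Suc)
  moreover have "(\<Sum>k\<le>Suc n. bd_rate r q n k * f k) = (\<Sum>k<m. bd_rate r q n k * f k)
      + bd_rate r q n m * f m + bd_rate r q n (Suc m) * f (Suc m) + bd_rate r q n (Suc (Suc m)) * f (Suc (Suc m))"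
    by (simp add: Suc lessThan_Suc_atMost[symmetric])
  ultimately show ?thesis by (simp add: bd_rate_def Suc algebra_simps)
qed (simp add: bd_rate_def)

locale bd_transition =
  fixes r q :: real and p :: "real \<Rightarrow> nat \<Rightarrow> nat \<Rightarrow> real"
  assumes q_nonneg: "0 \<le> q" and q_less_r: "q < r" and is_transition: "is_bd_transition r q p"
begin

lemma p_nonneg: "t \<ge> 0 \<Longrightarrow> 0 \<le> p t n m"
  using is_transition unfolding is_bd_transition_def by auto

lemma summable_p: "t \<ge> 0 \<Longrightarrow> summable (p t n)"
  using is_transition unfolding is_bd_transition_def by auto

lemma suminf_p_le_1: "t \<ge> 0 \<Longrightarrow> suminf (p t n) \<le> 1"
  using is_transition unfolding is_bd_transition_def by auto

lemma p_at_0: "p 0 n m = (if n = m then 1 else 0)"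
  using is_transition unfolding is_bd_transition_def by auto

lemma p_le_1:
  assumes "t \<ge> 0" shows "p t n m \<le> 1"
proof -
  have "p t n m = sum (p t n) {m}" by simp
  also have "\<dots> \<le> suminf (p t n)"
    by (rule sum_le_suminf) (use summable_p p_nonneg assms in auto)
  finally have "p t n m \<le> suminf (p t n)" .
  then show ?thesis using suminf_p_le_1[OF assms, of n] by linarith
qed

lemma p_backward:
  assumes "t \<ge> 0"
  shows "((\<lambda>s. p s n m) has_real_derivative
    real n * (r * p t (Suc n) m - (r + q) * p t n m + q * p t (n - 1) m)) (at t within {0..})"
proof -
  have "((\<lambda>s. p s n m) has_real_derivative (\<Sum>k\<le>Suc n. bd_rate r q n k * p t k m)) (at t within {0..})"
    using is_transition assms unfolding is_bd_transition_def by blast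
  then show ?thesis unfolding bd_rate_sum .
qed

lemma p_from_0:
  assumes "t \<ge> 0" shows "p t 0 m = (if m = 0 then 1 else 0)"
proof -
  obtain c where "\<forall>x\<in>{0::real..}. p x 0 m = c"
    using has_field_derivative_zero_constant[of "{0..}" "\<lambda>s. p s 0 m"] p_backward[of _ 0 m] by auto
  then have "p t 0 m = p 0 0 m" using assms by auto
  then show ?thesis by (simp add: p_at_0)
qed

lemma backward_term_bound:
  assumes "t \<ge> 0"
  shows "\<bar>r * p t (Suc n) m - (r + q) * p t n m + q * p t (n - 1) m\<bar> \<le> 2 * (r + q)"
proof -
  have bound: "\<bar>x - y + w\<bar> \<le> 2 * (r + q)" if "\<bar>x\<bar> \<le> r" "\<bar>y\<bar> \<le> r + q" "\<bar>w\<bar> \<le> q" for x y w :: real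
  proof -
    have "\<bar>x - y + w\<bar> \<le> \<bar>x\<bar> + \<bar>y\<bar> + \<bar>w\<bar>"
      by (rule order_trans[OF abs_triangle_ineq]) (simp add: abs_triangle_ineq4)
    also have "\<dots> \<le> r + (r + q) + q" using that by (intro add_mono)
    also have "\<dots> = 2 * (r + q)" by (simp add: algebra_simps)
    finally show ?thesis .
  qed
  have "\<bar>c * p t k m\<bar> \<le> c" if "0 \<le> c" for c k
    using p_nonneg[OF assms] p_le_1[OF assms] that by (simp add: abs_mult mult_left_le)
  moreover have "0 \<le> r" using q_nonneg q_less_r by linarith
  ultimately show ?thesis using q_nonneg by (intro bound) simp_all
qed

definition gen_fun :: "real \<Rightarrow> nat \<Rightarrow> real \<Rightarrow> real" where
  "gen_fun t n z = (\<Sum>m. p t n m * z ^ m)"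

lemma summable_gen_fun:
  assumes "t \<ge> 0" "0 \<le> z" "z \<le> 1"
  shows "summable (\<lambda>m. p t n m * z ^ m)"
proof (rule summable_comparison_test'[OF summable_p[OF assms(1), of n]])
  show "norm (p t n m * z ^ m) \<le> p t n m" for m
    using p_nonneg[OF assms(1)] assms by (simp add: abs_mult mult_left_le power_le_one)
qed

lemma gen_fun_sums: "t \<ge> 0 \<Longrightarrow> 0 \<le> z \<Longrightarrow> z \<le> 1 \<Longrightarrow> (\<lambda>m. p t n m * z ^ m) sums gen_fun t n z"
  unfolding gen_fun_def by (rule summable_sums[OF summable_gen_fun])

lemma gen_fun_bounds:
  assumes "t \<ge> 0" "0 \<le> z" "z \<le> 1"
  shows "0 \<le> gen_fun t n z" "gen_fun t n z \<le> 1"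
proof -
  show "0 \<le> gen_fun t n z" unfolding gen_fun_def
    by (rule suminf_nonneg[OF summable_gen_fun[OF assms]]) (use p_nonneg[OF assms(1)] assms in auto)
  have "gen_fun t n z \<le> suminf (p t n)" unfolding gen_fun_def
    by (rule suminf_le[OF _ summable_gen_fun[OF assms] summable_p[OF assms(1)]])
       (use p_nonneg[OF assms(1)] assms in \<open>auto simp: mult_left_le power_le_one\<close>)
  then show "gen_fun t n z \<le> 1" using suminf_p_le_1[OF assms(1), of n] by linarith
qed

lemma gen_fun_from_0:
  assumes "t \<ge> 0" shows "gen_fun t 0 z = 1"
proof -
  have "(\<lambda>m. p t 0 m * z ^ m) = (\<lambda>m. if m = 0 then 1 else 0)"
    using p_from_0[OF assms] by auto
  then show ?thesis unfolding gen_fun_def using sums_single[of 0 "\<lambda>_. 1::real"] sums_unique by fastforce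
qed

lemma gen_fun_at_0: "gen_fun 0 n z = z ^ n"
proof -
  have "(\<lambda>m. p 0 n m * z ^ m) = (\<lambda>m. if m = n then z ^ m else 0)"
    using p_at_0 by auto
  then show ?thesis unfolding gen_fun_def using sums_single[of n "\<lambda>m. z ^ m"] sums_unique by fastforce
qed

lemma gen_fun_backward:
  assumes t: "t \<ge> 0" and z: "0 \<le> z" "z < 1"
  shows "((\<lambda>s. gen_fun s n z) has_real_derivative
     real n * (r * gen_fun t (Suc n) z - (r + q) * gen_fun t n z + q * gen_fun t (n - 1) z)) (at t within {0..})"
proof -
  define f' where "f' m s = real n * (r * p s (Suc n) m - (r + q) * p s n m + q * p s (n - 1) m) * z ^ m" for m s
  have "((\<lambda>s. \<Sum>m. p s n m * z ^ m) has_real_derivative (\<Sum>m. f' m t)) (at t within {0..})"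
  proof (rule has_real_derivative_suminf_dominated[where C="\<lambda>m. real n * (2 * (r + q)) * z ^ m"])
    show "((\<lambda>s. p s n m * z ^ m) has_real_derivative f' m x) (at x within {0..})" if "x \<in> {0..}" for m x
      using that unfolding f'_def by (auto intro!: derivative_eq_intros p_backward)
    show "\<bar>f' m x\<bar> \<le> real n * (2 * (r + q)) * z ^ m" if "x \<in> {0..}" for m x
      using backward_term_bound[of x n m] that z unfolding f'_def
      by (simp add: abs_mult mult_right_mono mult_left_mono)
    show "summable (\<lambda>m. real n * (2 * (r + q)) * z ^ m)"
      using z by (intro summable_mult summable_geometric) auto
  qed (use t z summable_gen_fun in auto)
  moreover have "(\<lambda>m. f' m t) sums (real n * (r * gen_fun t (Suc n) z - (r + q) * gen_fun t n z + q * gen_fun t (n - 1) z))"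
  proof -
    have "(\<lambda>i. real n * (r * (p t (Suc n) i * z ^ i) - (r + q) * (p t n i * z ^ i) + q * (p t (n - 1) i * z ^ i)))
        sums (real n * (r * gen_fun t (Suc n) z - (r + q) * gen_fun t n z + q * gen_fun t (n - 1) z))"
      using gen_fun_sums[OF t z(1)] z by (intro sums_mult sums_add sums_diff) auto
    moreover have "(\<lambda>i. real n * (r * (p t (Suc n) i * z ^ i) - (r + q) * (p t n i * z ^ i) + q * (p t (n - 1) i * z ^ i)))
        = (\<lambda>m. f' m t)"
      unfolding f'_def by (simp add: fun_eq_iff algebra_simps)
    ultimately show ?thesis by simp
  qed
  ultimately show ?thesis unfolding gen_fun_def by (simp add: sums_iff)
qed

text \<open>The generating function of the process started from a single individual, the solution
  of the Riccati equation \<open>\<phi>' = r \<phi>\<^sup>2 - (r + q) \<phi> + q\<close> with \<open>\<phi> 0 = z\<close>.\<close>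
definition bd_phi :: "real \<Rightarrow> real \<Rightarrow> real" where
  "bd_phi t z = 1 - (r - q) * (1 - z) * exp ((r - q) * t) / ((r - q) + r * (1 - z) * (exp ((r - q) * t) - 1))"

lemma bd_phi_denominator_pos:
  assumes "t \<ge> 0" "z \<le> 1"
  shows "(r - q) + r * (1 - z) * (exp ((r - q) * t) - 1) > 0"
proof -
  have "exp ((r - q) * t) \<ge> 1" using assms q_less_r by simp
  then have "r * (1 - z) * (exp ((r - q) * t) - 1) \<ge> 0"
    using assms q_nonneg q_less_r by simp
  then show ?thesis using q_less_r by linarith
qed

lemma bd_phi_bounds:
  assumes "t \<ge> 0" "0 \<le> z" "z \<le> 1"
  shows "0 \<le> bd_phi t z" "bd_phi t z \<le> 1"
proof -
  define a where "a = r - q"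
  define w where "w = 1 - z"
  define E where "E = exp (a * t)"
  have a: "a > 0" using q_less_r unfolding a_def by simp
  have w: "0 \<le> w" "w \<le> 1" using assms unfolding w_def by auto
  have E: "E \<ge> 1" unfolding E_def using a assms by simp
  have denominator: "a + r * w * (E - 1) > 0"
    using bd_phi_denominator_pos[OF assms(1,3)] unfolding a_def w_def E_def .
  have "q * w * 1 \<le> q * w * E" using q_nonneg w E by (intro mult_left_mono) auto
  moreover have "a * (1 - w) \<ge> 0" using a w by simp
  ultimately have "a * w * E \<le> a + r * w * (E - 1)" unfolding a_def by (simp add: algebra_simps)
  moreover have "a * w * E \<ge> 0" using a w E by simp
  ultimately have "0 \<le> a * w * E / (a + r * w * (E - 1))" "a * w * E / (a + r * w * (E - 1)) \<le> 1"
    using denominator by simp_all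
  then show "0 \<le> bd_phi t z" "bd_phi t z \<le> 1" unfolding bd_phi_def a_def w_def E_def by simp_all
qed

lemma bd_phi_at_0: "bd_phi 0 z = z"
  using q_less_r by (simp add: bd_phi_def)

lemma bd_phi_riccati:
  assumes t: "t \<ge> 0" and z: "z \<le> 1"
  shows "((\<lambda>s. bd_phi s z) has_real_derivative r * (bd_phi t z)\<^sup>2 - (r + q) * bd_phi t z + q) (at t within {0..})"
proof -
  define a where "a = r - q"
  define w where "w = 1 - z"
  define D where "D x = a + r * w * (exp (a * x) - 1)" for x
  define \<psi> where "\<psi> = a * w * exp (a * t) / D t"
  have D: "D t > 0" using bd_phi_denominator_pos[OF t z] unfolding D_def a_def w_def .
  have phi_eq: "bd_phi x z = 1 - a * w * exp (a * x) / D x" for x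
    unfolding bd_phi_def D_def a_def w_def ..
  have "((\<lambda>x. 1 - a * w * exp (a * x) / D x) has_real_derivative
      - ((a * w * (exp (a * t) * a) * D t - a * w * exp (a * t) * (r * w * (exp (a * t) * a))) / (D t * D t))) (at t)"
    unfolding D_def using D unfolding D_def by (intro derivative_eq_intros refl) auto
  moreover have "- ((a * w * (exp (a * t) * a) * D t - a * w * exp (a * t) * (r * w * (exp (a * t) * a))) / (D t * D t))
      = r * (1 - \<psi>)\<^sup>2 - (r + q) * (1 - \<psi>) + q"
  proof -
    have "D t - r * w * exp (a * t) = a - r * w" unfolding D_def by (simp add: algebra_simps)
    then have "- ((a * w * (exp (a * t) * a) * D t - a * w * exp (a * t) * (r * w * (exp (a * t) * a))) / (D t * D t))
        = - (a * \<psi> - r * \<psi>\<^sup>2)"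
      unfolding \<psi>_def using D by (simp add: field_simps power2_eq_square)
    then show ?thesis unfolding a_def by (simp add: power2_eq_square algebra_simps)
  qed
  moreover have "1 - \<psi> = bd_phi t z" unfolding \<psi>_def phi_eq ..
  ultimately show ?thesis
    unfolding phi_eq[abs_def] by (simp add: has_field_derivative_at_within)
qed

lemma gen_fun_eq_bd_phi_power:
  assumes t: "t \<ge> 0" and z: "0 \<le> z" "z < 1"
  shows "gen_fun t n z = bd_phi t z ^ n"
proof -
  define D where "D s k = gen_fun s k z - bd_phi s z ^ k" for s k
  have "D t n = 0"
  proof (rule backward_equation_unique[where B=2 and D=D and q=q and r=r])
    fix s k assume s: "(s::real) \<ge> 0"
    have "0 \<le> bd_phi s z ^ k" "bd_phi s z ^ k \<le> 1"
      using bd_phi_bounds[OF s, of z] z by (auto intro: power_le_one)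
    then show "\<bar>D s k\<bar> \<le> 2" using gen_fun_bounds[OF s, of z k] z unfolding D_def by auto
  next
    fix s :: real and k assume s: "s \<ge> 0"
    have "((\<lambda>x. bd_phi x z ^ k) has_real_derivative
        real k * bd_phi s z ^ (k - 1) * (r * (bd_phi s z)\<^sup>2 - (r + q) * bd_phi s z + q)) (at s within {0..})"
      using bd_phi_riccati[OF s, of z] z by (auto intro!: derivative_eq_intros)
    also have "real k * bd_phi s z ^ (k - 1) * (r * (bd_phi s z)\<^sup>2 - (r + q) * bd_phi s z + q)
        = real k * (r * bd_phi s z ^ Suc k - (r + q) * bd_phi s z ^ k + q * bd_phi s z ^ (k - 1))"
      by (cases k) (simp_all add: power2_eq_square algebra_simps)
    finally have "((\<lambda>x. bd_phi x z ^ k) has_real_derivative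
        real k * (r * bd_phi s z ^ Suc k - (r + q) * bd_phi s z ^ k + q * bd_phi s z ^ (k - 1))) (at s within {0..})" .
    from DERIV_diff[OF gen_fun_backward[OF s z, of k] this] show "((\<lambda>x. D x k) has_real_derivative
        real k * (r * D s (Suc k) - (r + q) * D s k + q * D s (k - 1))) (at s within {0..})"
      unfolding D_def by (simp add: algebra_simps)
  qed (use t q_nonneg q_less_r gen_fun_from_0 in \<open>auto simp: D_def gen_fun_at_0 bd_phi_at_0\<close>)
  then show ?thesis unfolding D_def by simp
qed

text \<open>The branching property, read off from the multiplicativity of the generating functions.\<close>
lemma p_branching:
  assumes t: "t \<ge> 0"
  shows "p t (u + v) m = (\<Sum>x\<le>m. p t u x * p t v (m - x))"
proof -
  define c where "c m = (\<Sum>x\<le>m. p t u x * p t v (m - x))" for m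
  have c_bounds: "0 \<le> c k \<and> c k \<le> 1" for k
  proof -
    have "c k \<le> (\<Sum>x<Suc k. p t u x)" unfolding c_def lessThan_Suc_atMost
      by (rule sum_mono) (use p_nonneg[OF t] p_le_1[OF t] in \<open>auto simp: mult_left_le\<close>)
    also have "\<dots> \<le> suminf (p t u)" by (rule sum_le_suminf) (use summable_p[OF t] p_nonneg[OF t] in auto)
    also have "\<dots> \<le> 1" by (rule suminf_p_le_1[OF t])
    finally show ?thesis unfolding c_def using p_nonneg[OF t] by (auto intro: sum_nonneg)
  qed
  have "p t (u + v) m - c m = 0"
  proof (rule powser_bounded_coeffs_eq_0[where B=2])
    show "\<bar>p t (u + v) k - c k\<bar> \<le> 2" for k
      using c_bounds[of k] p_nonneg[OF t, of "u + v" k] p_le_1[OF t, of "u + v" k] by (simp add: abs_le_iff)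
  next
    fix z :: real assume z: "0 < z" "z < 1"
    have summable: "summable (\<lambda>m. norm (p t k m * z ^ m))" for k
      using summable_gen_fun[OF t, of z k] z p_nonneg[OF t] by (simp add: abs_mult)
    have "(\<lambda>m. \<Sum>i\<le>m. (p t u i * z ^ i) * (p t v (m - i) * z ^ (m - i))) sums (gen_fun t u z * gen_fun t v z)"
      unfolding gen_fun_def by (rule Cauchy_product_sums[OF summable summable])
    moreover have "(\<Sum>i\<le>m. (p t u i * z ^ i) * (p t v (m - i) * z ^ (m - i))) = c m * z ^ m" for m
      unfolding c_def sum_distrib_right by (rule sum.cong) (auto simp: power_add[symmetric] mult_ac)
    moreover have "gen_fun t u z * gen_fun t v z = gen_fun t (u + v) z"
      using gen_fun_eq_bd_phi_power[OF t] z by (simp add: power_add)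
    ultimately have "(\<lambda>m. c m * z ^ m) sums gen_fun t (u + v) z" by simp
    from sums_diff[OF gen_fun_sums[OF t, of z "u + v"] this] z
    have "(\<lambda>m. (p t (u + v) m - c m) * z ^ m) sums 0" by (simp add: left_diff_distrib)
    then show "(\<Sum>m. (p t (u + v) m - c m) * z ^ m) = 0" by (rule sums_unique[symmetric])
  qed
  then show ?thesis unfolding c_def by simp
qed

end

lemma nn_integral_count_space_singleton:
  assumes "a \<in> A"
  shows "(\<integral>\<^sup>+x. indicator {a} x * c \<partial>count_space A) = c"
  using assms by (simp add: mult.commute[of "indicator {a} _"])

lemma nn_integral_count_space_cmult:
  "(\<integral>\<^sup>+x. c * f x \<partial>count_space A) = c * (\<integral>\<^sup>+x. f x \<partial>count_space A)"
  by (rule nn_integral_cmult) simp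

lemma nn_integral_count_space_restrict:
  assumes "B \<subseteq> A"
  shows "(\<integral>\<^sup>+x. indicator B x * f x \<partial>count_space A) = (\<integral>\<^sup>+x. f x \<partial>count_space B)"
proof -
  have "(\<integral>\<^sup>+x. f x \<partial>count_space B) = (\<integral>\<^sup>+x. f x * indicator B x \<partial>count_space UNIV)"
    by (cases "B = UNIV") (auto simp: nn_integral_count_space_indicator)
  also have "\<dots> = (\<integral>\<^sup>+x. (indicator B x * f x) * indicator A x \<partial>count_space UNIV)"
    by (rule nn_integral_cong) (use assms in \<open>auto split: split_indicator\<close>)
  also have "\<dots> = (\<integral>\<^sup>+x. indicator B x * f x \<partial>count_space A)"
    by (cases "A = UNIV") (auto simp: nn_integral_count_space_indicator)
  finally show ?thesis ..
qed

lemma nn_integral_count_space_swap: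
  fixes f :: "'a \<Rightarrow> 'b \<Rightarrow> ennreal"
  assumes "countable A"
  shows "(\<integral>\<^sup>+a. \<integral>\<^sup>+b. f a b \<partial>count_space B \<partial>count_space A) = (\<integral>\<^sup>+b. \<integral>\<^sup>+a. f a b \<partial>count_space A \<partial>count_space B)"
  by (rule nn_integral_count_space_nn_integral[OF assms, symmetric]) simp

lemma nn_integral_count_space_Sigma:
  fixes f :: "'a \<times> 'b \<Rightarrow> ennreal"
  assumes A: "countable A"
  shows "(\<integral>\<^sup>+z. f z \<partial>count_space (A \<times> B)) = (\<integral>\<^sup>+a. \<integral>\<^sup>+b. f (a, b) \<partial>count_space B \<partial>count_space A)"
proof -
  have "(\<integral>\<^sup>+z. f z \<partial>count_space (A \<times> B))
      = (\<integral>\<^sup>+z. \<integral>\<^sup>+a. indicator {fst z} a * f z \<partial>count_space A \<partial>count_space (A \<times> B))"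
    by (rule nn_integral_cong) (auto simp: nn_integral_count_space_singleton)
  also have "\<dots> = (\<integral>\<^sup>+a. \<integral>\<^sup>+z. indicator ({a} \<times> B) z * f z \<partial>count_space (A \<times> B) \<partial>count_space A)"
    by (subst nn_integral_count_space_nn_integral[OF A])
       (auto intro!: nn_integral_cong split: split_indicator)
  also have "\<dots> = (\<integral>\<^sup>+a. \<integral>\<^sup>+b. f (a, b) \<partial>count_space B \<partial>count_space A)"
  proof (rule nn_integral_cong)
    fix a assume "a \<in> space (count_space A)"
    then have "(\<integral>\<^sup>+z. indicator ({a} \<times> B) z * f z \<partial>count_space (A \<times> B)) = (\<integral>\<^sup>+z. f z \<partial>count_space ({a} \<times> B))"
      by (intro nn_integral_count_space_restrict) auto
    also have "\<dots> = (\<integral>\<^sup>+b. f (a, b) \<partial>count_space B)"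
      by (rule nn_integral_bij_count_space[symmetric]) (auto simp: bij_betw_def inj_on_def)
    finally show "(\<integral>\<^sup>+z. indicator ({a} \<times> B) z * f z \<partial>count_space (A \<times> B)) = (\<integral>\<^sup>+b. f (a, b) \<partial>count_space B)" .
  qed
  finally show ?thesis .
qed

lemma nn_integral_count_space_convolution:
  fixes a b :: "nat \<Rightarrow> real" and f :: "nat \<Rightarrow> ennreal"
  assumes "\<And>x. 0 \<le> a x" and "\<And>x. 0 \<le> b x"
  shows "(\<integral>\<^sup>+x. \<integral>\<^sup>+y. ennreal (a x) * ennreal (b y) * f (x + y) \<partial>count_space UNIV \<partial>count_space UNIV)
       = (\<integral>\<^sup>+z. ennreal (\<Sum>x\<le>z. a x * b (z - x)) * f z \<partial>count_space UNIV)"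
proof -
  let ?g = "\<lambda>x z. indicator {..z} x * (ennreal (a x) * ennreal (b (z - x)) * f z)"
  have "(\<integral>\<^sup>+z. ennreal (\<Sum>x\<le>z. a x * b (z - x)) * f z \<partial>count_space UNIV)
      = (\<integral>\<^sup>+z. \<integral>\<^sup>+x. ?g x z \<partial>count_space UNIV \<partial>count_space UNIV)"
  proof (rule nn_integral_cong)
    fix z :: nat
    have "ennreal (\<Sum>x\<le>z. a x * b (z - x)) * f z = (\<Sum>x\<le>z. ennreal (a x) * ennreal (b (z - x)) * f z)"
      using assms by (simp add: sum_distrib_right ennreal_mult[symmetric] sum_ennreal[symmetric]
          mult_nonneg_nonneg del: sum_ennreal)
    also have "\<dots> = (\<integral>\<^sup>+x. ?g x z \<partial>count_space UNIV)"
      by (simp add: nn_integral_count_space_restrict nn_integral_count_space_finite)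
    finally show "ennreal (\<Sum>x\<le>z. a x * b (z - x)) * f z = (\<integral>\<^sup>+x. ?g x z \<partial>count_space UNIV)" .
  qed
  also have "\<dots> = (\<integral>\<^sup>+x. \<integral>\<^sup>+z. ?g x z \<partial>count_space UNIV \<partial>count_space UNIV)"
    by (rule nn_integral_count_space_swap[symmetric]) simp
  also have "\<dots> = (\<integral>\<^sup>+x. \<integral>\<^sup>+y. ennreal (a x) * ennreal (b y) * f (x + y) \<partial>count_space UNIV \<partial>count_space UNIV)"
  proof (rule nn_integral_cong)
    fix x :: nat
    have "(\<integral>\<^sup>+z. ?g x z \<partial>count_space UNIV)
        = (\<integral>\<^sup>+z. indicator {x..} z * (ennreal (a x) * ennreal (b (z - x)) * f z) \<partial>count_space UNIV)"
      by (rule nn_integral_cong) (auto split: split_indicator)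
    also have "\<dots> = (\<integral>\<^sup>+z. ennreal (a x) * ennreal (b (z - x)) * f z \<partial>count_space {x..})"
      by (rule nn_integral_count_space_restrict) simp
    also have "\<dots> = (\<integral>\<^sup>+y. ennreal (a x) * ennreal (b (y + x - x)) * f (y + x) \<partial>count_space UNIV)"
      by (rule nn_integral_bij_count_space[symmetric])
         (rule bij_betw_byWitness[where f'="\<lambda>z. z - x"]; auto)
    finally show "(\<integral>\<^sup>+z. ?g x z \<partial>count_space UNIV)
        = (\<integral>\<^sup>+y. ennreal (a x) * ennreal (b y) * f (x + y) \<partial>count_space UNIV)"
      by (simp add: add.commute)
  qed
  finally show ?thesis ..
qed

lemma nn_integral_count_space_PiE_insert:
  fixes G :: "('v \<Rightarrow> 'a) \<Rightarrow> ennreal"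
  assumes "i \<notin> K" and "countable (UNIV :: 'a set)"
  shows "(\<integral>\<^sup>+v. G v \<partial>count_space (PiE (insert i K) (\<lambda>_. UNIV)))
       = (\<integral>\<^sup>+x. \<integral>\<^sup>+w. G (w(i := x)) \<partial>count_space (PiE K (\<lambda>_. UNIV)) \<partial>count_space UNIV)"
proof -
  have "bij_betw (\<lambda>(y, g). g(i := y)) (UNIV \<times> PiE K (\<lambda>_. UNIV)) (PiE (insert i K) (\<lambda>_. UNIV))"
  proof (rule bij_betw_imageI)
    show "inj_on (\<lambda>(y, g). g(i := y)) (UNIV \<times> PiE K (\<lambda>_. UNIV))"
    proof (rule inj_onI, clarify)
      fix y g y' g' assume g: "g \<in> PiE K (\<lambda>_. UNIV)" "g' \<in> PiE K (\<lambda>_. UNIV)"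
        and eq: "g(i := y) = g'(i := y')"
      have "g j = g' j" for j
        using fun_cong[OF eq, of j] g assms(1) by (cases "j = i") (auto simp: PiE_def extensional_def)
      then show "y = y' \<and> g = g'" using fun_cong[OF eq, of i] by auto
    qed
  qed (simp add: PiE_insert_eq)
  then have "(\<integral>\<^sup>+v. G v \<partial>count_space (PiE (insert i K) (\<lambda>_. UNIV)))
      = (\<integral>\<^sup>+z. G ((\<lambda>(y, g). g(i := y)) z) \<partial>count_space (UNIV \<times> PiE K (\<lambda>_. UNIV)))"
    by (rule nn_integral_bij_count_space[symmetric])
  also have "\<dots> = (\<integral>\<^sup>+x. \<integral>\<^sup>+w. G (w(i := x)) \<partial>count_space (PiE K (\<lambda>_. UNIV)) \<partial>count_space UNIV)"
    by (subst nn_integral_count_space_Sigma[OF assms(2)]) simp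
  finally show ?thesis .
qed

section \<open>The mass ratio is a supermartingale\<close>

definition share :: "nat \<Rightarrow> nat \<Rightarrow> ennreal" where
  "share x y = ennreal (if x + y > 0 then real x / real (x + y) else 0)"

lemma share_0_left: "share 0 y = 0"
  by (simp add: share_def)

lemma share_add_left: "share (x1 + x2) y = share x1 (x2 + y) + share x2 (x1 + y)"
proof (cases "x1 + x2 + y > 0")
  case True
  then have "real (x1 + x2) / real (x1 + x2 + y)
      = real x1 / real (x1 + (x2 + y)) + real x2 / real (x2 + (x1 + y))"
    by (simp add: add_divide_distrib add_ac)
  with True show ?thesis
    by (simp add: share_def ennreal_plus[symmetric] add_ac del: ennreal_plus)
qed (simp add: share_def)

definition mass_ratio :: "'v set \<Rightarrow> 'v set \<Rightarrow> ('v \<Rightarrow> nat) \<Rightarrow> real" where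
  "mass_ratio I J v = (if (\<Sum>i\<in>I. v i) > 0 then real (\<Sum>i\<in>J. v i) / real (\<Sum>i\<in>I. v i) else 0)"

lemma mass_ratio_nonneg: "mass_ratio I J v \<ge> 0"
  unfolding mass_ratio_def by (simp del: of_nat_sum)

lemma mass_ratio_le_1:
  assumes "finite I" "J \<subseteq> I"
  shows "mass_ratio I J v \<le> 1"
proof -
  define a where "a = (\<Sum>i\<in>J. v i)"
  define b where "b = (\<Sum>i\<in>I. v i)"
  have "real a \<le> real b"
    using sum_mono2[OF assms, of v] unfolding a_def b_def by (simp only: of_nat_le_iff)
  then have "(if b > 0 then real a / real b else 0) \<le> 1" by (auto simp: divide_le_eq_1)
  then show ?thesis unfolding mass_ratio_def a_def b_def .
qed

lemma mass_ratio_cong: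
  assumes "J \<subseteq> I" "\<And>i. i \<in> I \<Longrightarrow> v i = v' i"
  shows "mass_ratio I J v = mass_ratio I J v'"
proof -
  have "sum v I = sum v' I" "sum v J = sum v' J"
    using assms by (auto intro: sum.cong)
  then show ?thesis unfolding mass_ratio_def by simp
qed

lemma mass_ratio_const_1:
  assumes "finite I" "J \<subseteq> I"
  shows "mass_ratio I J (\<lambda>_. 1) = real (card J) / real (card I)"
  using assms by (auto simp: mass_ratio_def card_gt_0_iff)

lemma mass_ratio_eq_sum_share:
  assumes "finite I" "J \<subseteq> I"
  shows "ennreal (mass_ratio I J v) = (\<Sum>i\<in>J. share (v i) (\<Sum>k\<in>I - {i}. v k))"
proof -
  have total: "(\<Sum>k\<in>I. v k) = v i + (\<Sum>k\<in>I - {i}. v k)" if "i \<in> J" for i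
    using that assms by (intro sum.remove) auto
  show ?thesis
  proof (cases "(\<Sum>k\<in>I. v k) > 0")
    case True
    have "(\<Sum>i\<in>J. share (v i) (\<Sum>k\<in>I - {i}. v k)) = (\<Sum>i\<in>J. ennreal (real (v i) / real (\<Sum>k\<in>I. v k)))"
      by (rule sum.cong) (use True total in \<open>auto simp: share_def\<close>)
    also have "\<dots> = ennreal (\<Sum>i\<in>J. real (v i) / real (\<Sum>k\<in>I. v k))"
      by (rule sum_ennreal) (auto intro!: divide_nonneg_nonneg sum_nonneg)
    also have "(\<Sum>i\<in>J. real (v i) / real (\<Sum>k\<in>I. v k)) = mass_ratio I J v"
      unfolding mass_ratio_def using True by (simp add: sum_divide_distrib[symmetric])
    finally show ?thesis ..
  qed (use total in \<open>auto simp: mass_ratio_def share_def intro!: sum.neutral\<close>)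
qed

lemma bd_ratio_eq_mass_ratio: "bd_ratio N I J t \<omega> = mass_ratio I J (\<lambda>i. N i t \<omega>)"
  unfolding bd_ratio_def mass_ratio_def by simp

context bd_transition
begin

abbreviation ennp :: "real \<Rightarrow> nat \<Rightarrow> nat \<Rightarrow> ennreal" where
  "ennp t n x \<equiv> ennreal (p t n x)"

lemma nn_integral_p_le_1:
  assumes "t \<ge> 0" shows "(\<integral>\<^sup>+x. ennp t n x \<partial>count_space UNIV) \<le> 1"
proof -
  have "(\<integral>\<^sup>+x. ennp t n x \<partial>count_space UNIV) = ennreal (suminf (p t n))"
    by (simp add: nn_integral_count_space_nat suminf_ennreal2 p_nonneg summable_p assms)
  then show ?thesis using suminf_p_le_1[OF assms] by simp
qed

lemma nn_integral_p_from_0: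
  assumes "t \<ge> 0" shows "(\<integral>\<^sup>+x. ennp t 0 x * g x \<partial>count_space UNIV) = g 0"
proof -
  have "(\<lambda>x. ennp t 0 x * g x) = (\<lambda>x. indicator {0} x * g 0)"
    by (auto simp: fun_eq_iff p_from_0[OF assms] split: split_indicator)
  then show ?thesis by (simp add: nn_integral_count_space_singleton)
qed

lemma nn_integral_p_convolution:
  assumes "t \<ge> 0"
  shows "(\<integral>\<^sup>+x. ennp t u x * (\<integral>\<^sup>+y. ennp t v y * f (x + y) \<partial>count_space UNIV) \<partial>count_space UNIV)
       = (\<integral>\<^sup>+z. ennp t (u + v) z * f z \<partial>count_space UNIV)"
  using nn_integral_count_space_convolution[of "p t u" "p t v" f] p_nonneg[OF assms] p_branching[OF assms]
  by (simp add: nn_integral_count_space_cmult[symmetric] mult.assoc)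

lemma nn_integral_prod_PiE_insert:
  assumes "finite K" "i \<notin> K"
  shows "(\<integral>\<^sup>+v. (\<Prod>j\<in>insert i K. ennp t (n j) (v j)) * g v \<partial>count_space (PiE (insert i K) (\<lambda>_. UNIV)))
    = (\<integral>\<^sup>+x. ennp t (n i) x * (\<integral>\<^sup>+w. (\<Prod>j\<in>K. ennp t (n j) (w j)) * g (w(i := x))
        \<partial>count_space (PiE K (\<lambda>_. UNIV))) \<partial>count_space UNIV)"
proof -
  have "(\<Prod>j\<in>K. ennp t (n j) ((w(i := x)) j)) = (\<Prod>j\<in>K. ennp t (n j) (w j))" for w x
    using assms by (intro prod.cong) auto
  then show ?thesis
    using assms
    by (simp add: nn_integral_count_space_PiE_insert nn_integral_count_space_cmult[symmetric] mult.assoc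
        prod.insert_if)
qed

lemma nn_integral_sum_PiE:
  assumes "finite K" "t \<ge> 0"
  shows "(\<integral>\<^sup>+w. (\<Prod>i\<in>K. ennp t (n i) (w i)) * f (\<Sum>i\<in>K. w i) \<partial>count_space (PiE K (\<lambda>_. UNIV)))
       = (\<integral>\<^sup>+z. ennp t (\<Sum>i\<in>K. n i) z * f z \<partial>count_space UNIV)"
  using assms(1)
proof (induction K arbitrary: f rule: finite_induct)
  case empty
  then show ?case by (simp add: nn_integral_count_space_finite nn_integral_p_from_0[OF assms(2)])
next
  case (insert i K)
  have sum_upd: "(\<Sum>j\<in>insert i K. (w(i := x)) j) = x + (\<Sum>j\<in>K. w j)" for w x
  proof -
    have "(\<Sum>j\<in>K. (w(i := x)) j) = (\<Sum>j\<in>K. w j)" using insert(2) by (intro sum.cong) auto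
    then show ?thesis using insert(1,2) by (simp del: fun_upd_apply add: fun_upd_same)
  qed
  have "(\<integral>\<^sup>+w. (\<Prod>j\<in>insert i K. ennp t (n j) (w j)) * f (\<Sum>j\<in>insert i K. w j) \<partial>count_space (PiE (insert i K) (\<lambda>_. UNIV)))
      = (\<integral>\<^sup>+x. ennp t (n i) x * (\<integral>\<^sup>+w. (\<Prod>j\<in>K. ennp t (n j) (w j)) * f (x + (\<Sum>j\<in>K. w j))
          \<partial>count_space (PiE K (\<lambda>_. UNIV))) \<partial>count_space UNIV)"
    unfolding nn_integral_prod_PiE_insert[OF insert(1,2)] sum_upd ..
  also have "\<dots> = (\<integral>\<^sup>+x. ennp t (n i) x * (\<integral>\<^sup>+y. ennp t (\<Sum>j\<in>K. n j) y * f (x + y) \<partial>count_space UNIV) \<partial>count_space UNIV)"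
    using insert(3)[of "\<lambda>s. f (_ + s)"] by simp
  also have "\<dots> = (\<integral>\<^sup>+z. ennp t (n i + (\<Sum>j\<in>K. n j)) z * f z \<partial>count_space UNIV)"
    by (rule nn_integral_p_convolution[OF assms(2)])
  finally show ?case using insert(1,2) by simp
qed

definition expected_share :: "real \<Rightarrow> nat \<Rightarrow> nat \<Rightarrow> ennreal" where
  "expected_share t a c = (\<integral>\<^sup>+x. ennp t a x * (\<integral>\<^sup>+y. ennp t c y * share x y \<partial>count_space UNIV) \<partial>count_space UNIV)"

lemma expected_share_from_0: "t \<ge> 0 \<Longrightarrow> expected_share t 0 c = 0"
  unfolding expected_share_def by (simp add: nn_integral_p_from_0 share_0_left)

lemma expected_share_Suc:
  assumes "t \<ge> 0"
  shows "expected_share t (Suc a) c = expected_share t 1 (a + c) + expected_share t a (Suc c)"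
proof -
  let ?N = "count_space (UNIV :: nat set)"
  define S where "S x z = (\<integral>\<^sup>+y. ennp t c y * share x (z + y) \<partial>?N)" for x z
  have "expected_share t (Suc a) c
      = (\<integral>\<^sup>+x1. ennp t 1 x1 * (\<integral>\<^sup>+x2. ennp t a x2 * (S x1 x2 + S x2 x1) \<partial>?N) \<partial>?N)"
    using nn_integral_p_convolution[OF assms, of 1 a "\<lambda>x. \<integral>\<^sup>+y. ennp t c y * share x y \<partial>?N"]
    unfolding expected_share_def S_def share_add_left
    by (simp add: distrib_left nn_integral_add add.commute)
  also have "\<dots> = (\<integral>\<^sup>+x1. ennp t 1 x1 * (\<integral>\<^sup>+x2. ennp t a x2 * S x1 x2 \<partial>?N) \<partial>?N)
      + (\<integral>\<^sup>+x1. \<integral>\<^sup>+x2. ennp t 1 x1 * (ennp t a x2 * S x2 x1) \<partial>?N \<partial>?N)"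
    by (simp add: distrib_left nn_integral_add nn_integral_count_space_cmult[symmetric])
  also have "(\<integral>\<^sup>+x1. \<integral>\<^sup>+x2. ennp t 1 x1 * (ennp t a x2 * S x2 x1) \<partial>?N \<partial>?N)
      = (\<integral>\<^sup>+x2. ennp t a x2 * (\<integral>\<^sup>+x1. ennp t 1 x1 * S x2 x1 \<partial>?N) \<partial>?N)"
    by (subst nn_integral_count_space_swap)
       (simp_all add: nn_integral_count_space_cmult[symmetric] mult.left_commute)
  also have "(\<integral>\<^sup>+x1. ennp t 1 x1 * (\<integral>\<^sup>+x2. ennp t a x2 * S x1 x2 \<partial>?N) \<partial>?N) = expected_share t 1 (a + c)"
    unfolding expected_share_def S_def by (simp add: nn_integral_p_convolution[OF assms])
  also have "(\<integral>\<^sup>+x2. ennp t a x2 * (\<integral>\<^sup>+x1. ennp t 1 x1 * S x2 x1 \<partial>?N) \<partial>?N) = expected_share t a (Suc c)"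
    unfolding expected_share_def S_def using nn_integral_p_convolution[OF assms, of 1 c] by simp
  finally show ?thesis .
qed

text \<open>By exchangeability of the individuals, the expected share is linear in the size of the
  distinguished subpopulation.\<close>
lemma expected_share_linear:
  assumes "t \<ge> 0" "a \<le> n"
  shows "expected_share t a (n - a) = of_nat a * expected_share t 1 (n - 1)"
  using assms(2)
proof (induction a)
  case (Suc a)
  then have "a + (n - Suc a) = n - 1" "Suc (n - Suc a) = n - a" by auto
  with Suc expected_share_Suc[OF assms(1), of a "n - Suc a"] show ?case
    by (simp add: distrib_right)
qed (simp add: expected_share_from_0[OF assms(1)])

lemma expected_share_1_le:
  assumes "t \<ge> 0" "n \<ge> 1"
  shows "of_nat n * expected_share t 1 (n - 1) \<le> 1"
proof -
  have "expected_share t n 0 = (\<integral>\<^sup>+x. ennp t n x * share x 0 \<partial>count_space UNIV)"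
    unfolding expected_share_def by (simp add: nn_integral_p_from_0[OF assms(1)])
  also have "\<dots> \<le> (\<integral>\<^sup>+x. ennp t n x \<partial>count_space UNIV)"
    by (rule nn_integral_mono) (auto simp: share_def intro!: mult_left_le)
  also have "\<dots> \<le> 1" by (rule nn_integral_p_le_1[OF assms(1)])
  finally show ?thesis using expected_share_linear[OF assms(1), of n n] by simp
qed

lemma expected_share_le_share:
  assumes "t \<ge> 0"
  shows "expected_share t a c \<le> share a c"
proof (cases "a + c = 0")
  case False
  define n where "n = a + c"
  have "n \<ge> 1" using False unfolding n_def by linarith
  note total = expected_share_1_le[OF assms this]
  then have "expected_share t 1 (n - 1) \<noteq> \<top>"
    using \<open>n \<ge> 1\<close> by (auto simp: ennreal_mult_eq_top_iff top_unique)
  then obtain e where e: "expected_share t 1 (n - 1) = ennreal e" "e \<ge> 0"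
    by (cases "expected_share t 1 (n - 1)") auto
  have "ennreal (real n * e) \<le> 1"
    using total e by (simp add: ennreal_of_nat_eq_real_of_nat ennreal_mult)
  then have "real n * e \<le> 1" by (simp add: ennreal_le_1)
  have "expected_share t a c = ennreal (real a * e)"
    using expected_share_linear[OF assms, of a n] e unfolding n_def
    by (simp add: ennreal_of_nat_eq_real_of_nat ennreal_mult)
  also have "\<dots> \<le> ennreal (real a / real n)"
  proof (rule ennreal_leI)
    have "real a * e * real n \<le> real a"
      using mult_left_mono[OF \<open>real n * e \<le> 1\<close>, of "real a"] by (simp add: mult_ac)
    then show "real a * e \<le> real a / real n" using \<open>n \<ge> 1\<close> by (simp add: pos_le_divide_eq)
  qed
  also have "\<dots> = share a c"
    using \<open>n \<ge> 1\<close> unfolding share_def n_def by simp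
  finally show ?thesis .
qed (simp add: expected_share_from_0[OF assms])

lemma nn_integral_share_PiE:
  assumes "finite I" "i \<in> I" "t \<ge> 0"
  shows "(\<integral>\<^sup>+v. (\<Prod>j\<in>I. ennp t (n j) (v j)) * share (v i) (\<Sum>k\<in>I - {i}. v k) \<partial>count_space (PiE I (\<lambda>_. UNIV)))
    = expected_share t (n i) (\<Sum>k\<in>I - {i}. n k)"
proof -
  define K where "K = I - {i}"
  have I: "I = insert i K" "i \<notin> K" "finite K" using assms unfolding K_def by auto
  have sum_upd: "(\<Sum>k\<in>K. (w(i := x)) k) = (\<Sum>k\<in>K. w k)" for w x
    using I(2) by (intro sum.cong) auto
  have "(\<integral>\<^sup>+v. (\<Prod>j\<in>I. ennp t (n j) (v j)) * share (v i) (\<Sum>k\<in>K. v k) \<partial>count_space (PiE I (\<lambda>_. UNIV)))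
      = (\<integral>\<^sup>+x. ennp t (n i) x * (\<integral>\<^sup>+w. (\<Prod>j\<in>K. ennp t (n j) (w j)) * share x (\<Sum>k\<in>K. w k)
          \<partial>count_space (PiE K (\<lambda>_. UNIV))) \<partial>count_space UNIV)"
    unfolding I(1) nn_integral_prod_PiE_insert[OF I(3,2)] sum_upd fun_upd_same ..
  also have "\<dots> = expected_share t (n i) (\<Sum>k\<in>K. n k)"
    unfolding expected_share_def using nn_integral_sum_PiE[OF I(3) assms(3), of n "share _"] by simp
  finally show ?thesis unfolding K_def .
qed

lemma expected_mass_ratio_le:
  assumes "finite I" "J \<subseteq> I" "t \<ge> 0"
  shows "(\<integral>\<^sup>+v. (\<Prod>i\<in>I. ennp t (n i) (v i)) * ennreal (mass_ratio I J v) \<partial>count_space (PiE I (\<lambda>_. UNIV)))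
       \<le> ennreal (mass_ratio I J n)"
proof -
  have "(\<integral>\<^sup>+v. (\<Prod>i\<in>I. ennp t (n i) (v i)) * ennreal (mass_ratio I J v) \<partial>count_space (PiE I (\<lambda>_. UNIV)))
      = (\<Sum>i\<in>J. \<integral>\<^sup>+v. (\<Prod>j\<in>I. ennp t (n j) (v j)) * share (v i) (\<Sum>k\<in>I - {i}. v k) \<partial>count_space (PiE I (\<lambda>_. UNIV)))"
    unfolding mass_ratio_eq_sum_share[OF assms(1,2)] sum_distrib_left by (rule nn_integral_sum) simp
  also have "\<dots> = (\<Sum>i\<in>J. expected_share t (n i) (\<Sum>k\<in>I - {i}. n k))"
    using assms by (intro sum.cong refl nn_integral_share_PiE) auto
  also have "\<dots> \<le> (\<Sum>i\<in>J. share (n i) (\<Sum>k\<in>I - {i}. n k))"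
    by (intro sum_mono expected_share_le_share assms(3))
  also have "\<dots> = ennreal (mass_ratio I J n)"
    by (rule mass_ratio_eq_sum_share[OF assms(1,2), symmetric])
  finally show ?thesis .
qed

end

section \<open>A maximal inequality for the mass ratio\<close>

locale bd_family = bd_transition r q p + prob_space M
  for r q p and M :: "'w measure" +
  fixes V :: "'v set" and N :: "'v \<Rightarrow> real \<Rightarrow> 'w \<Rightarrow> nat"
  assumes measurable_N: "\<And>i t. i \<in> V \<Longrightarrow> t \<ge> 0 \<Longrightarrow> N i t \<in> measurable M (count_space UNIV)"
    and iid_family: "iid_bd_family M V N p"
begin

lemma sets_Collect_N_eq:
  assumes "i \<in> V" "t \<ge> 0"
  shows "{\<omega>\<in>space M. N i t \<omega> = k} \<in> sets M"
proof -
  have "N i t -` {k} \<inter> space M \<in> sets M"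
    using measurable_N[OF assms] by (rule measurable_sets) simp
  moreover have "{\<omega>\<in>space M. N i t \<omega> = k} = N i t -` {k} \<inter> space M" by auto
  ultimately show ?thesis by simp
qed

lemma sets_Collect_restrict:
  assumes "finite I" "I \<subseteq> V" "t \<ge> 0"
  shows "{\<omega>\<in>space M. P (restrict (\<lambda>i. N i t \<omega>) I)} \<in> sets M"
proof -
  have "{\<omega>\<in>space M. P (restrict (\<lambda>i. N i t \<omega>) I)} =
        (\<Union>v\<in>{v\<in>PiE I (\<lambda>_. UNIV). P v}. {\<omega>\<in>space M. \<forall>i\<in>I. N i t \<omega> = v i})"
  proof safe
    fix \<omega> assume "\<omega> \<in> space M" "P (restrict (\<lambda>i. N i t \<omega>) I)"
    then show "\<omega> \<in> (\<Union>v\<in>{v\<in>PiE I (\<lambda>_. UNIV). P v}. {\<omega>\<in>space M. \<forall>i\<in>I. N i t \<omega> = v i})"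
      by (intro UN_I[of "restrict (\<lambda>i. N i t \<omega>) I"]) auto
  next
    fix \<omega> v assume "v \<in> PiE I (\<lambda>_. UNIV)" "P v" "\<forall>i\<in>I. N i t \<omega> = v i"
    moreover have "restrict (\<lambda>i. N i t \<omega>) I = v"
      using calculation by (auto simp: PiE_def extensional_def restrict_def)
    ultimately show "P (restrict (\<lambda>i. N i t \<omega>) I)" by simp
  qed
  also have "\<dots> \<in> sets M"
  proof (rule sets.countable_UN'')
    show "countable {v\<in>PiE I (\<lambda>_. UNIV). P v}"
      by (rule countable_subset[OF _ countable_PiE[OF assms(1)]]) auto
    show "{\<omega>\<in>space M. \<forall>i\<in>I. N i t \<omega> = v i} \<in> sets M" for v
      using assms sets_Collect_N_eq by (intro sets.sets_Collect_finite_All) auto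
  qed
  finally show ?thesis .
qed

lemma sets_Collect_mass_ratio:
  assumes "finite I" "I \<subseteq> V" "J \<subseteq> I" "t \<ge> 0"
  shows "{\<omega>\<in>space M. Q (mass_ratio I J (\<lambda>i. N i t \<omega>))} \<in> sets M"
proof -
  have "mass_ratio I J (\<lambda>i. N i t \<omega>) = mass_ratio I J (restrict (\<lambda>i. N i t \<omega>) I)" for \<omega>
    using assms(3) by (rule mass_ratio_cong) simp
  then show ?thesis using sets_Collect_restrict[OF assms(1,2,4)] by simp
qed

end

locale bd_grid = bd_family r q p M V N
  for r q p and M :: "'w measure" and V :: "'v set" and N :: "'v \<Rightarrow> real \<Rightarrow> 'w \<Rightarrow> nat" +
  fixes I J :: "'v set" and ts :: "nat \<Rightarrow> real" and K :: nat and c :: real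
  assumes I: "finite I" "I \<subseteq> V" and J: "J \<subseteq> I" and ts_0: "ts 0 = 0"
    and ts_less: "\<And>l. l < K \<Longrightarrow> ts l < ts (Suc l)" and c_pos: "c > 0"
begin

lemma ts_nonneg: "l \<le> K \<Longrightarrow> ts l \<ge> 0"
proof (induction l)
  case (Suc l) then show ?case using ts_less[of l] by simp
qed (simp add: ts_0)

definition path_event :: "nat \<Rightarrow> (nat \<Rightarrow> 'v \<Rightarrow> nat) \<Rightarrow> 'w set" where
  "path_event j h = {\<omega>\<in>space M. \<forall>i\<in>I. \<forall>l\<le>j. N i (ts l) \<omega> = h l i}"

definition path_prob :: "nat \<Rightarrow> (nat \<Rightarrow> 'v \<Rightarrow> nat) \<Rightarrow> real" where
  "path_prob j h = (\<Prod>i\<in>I. (if h 0 i = 1 then 1 else 0) * (\<Prod>l<j. p (ts (Suc l) - ts l) (h l i) (h (Suc l) i)))"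

definition exceeds_from :: "nat \<Rightarrow> 'w set" where
  "exceeds_from j = {\<omega>\<in>space M. \<exists>l\<in>{j..K}. mass_ratio I J (\<lambda>i. N i (ts l) \<omega>) > c}"

lemma path_event_sets:
  assumes "j \<le> K" shows "path_event j h \<in> sets M"
proof -
  have "{\<omega>\<in>space M. \<forall>l\<in>{..j}. N i (ts l) \<omega> = h l i} \<in> sets M" if "i \<in> I" for i
    using that I assms ts_nonneg by (intro sets.sets_Collect_finite_All sets_Collect_N_eq) auto
  then have "{\<omega>\<in>space M. \<forall>i\<in>I. \<forall>l\<in>{..j}. N i (ts l) \<omega> = h l i} \<in> sets M"
    by (rule sets.sets_Collect_finite_All[OF _ I(1)])
  then show ?thesis unfolding path_event_def by (simp only: Ball_def atMost_iff)
qed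

lemma emeasure_path_event: "j \<le> K \<Longrightarrow> emeasure M (path_event j h) = ennreal (path_prob j h)"
proof -
  assume "j \<le> K"
  then have "\<And>l. l < j \<Longrightarrow> ts l < ts (Suc l)" using ts_less by auto
  then have "measure M (path_event j h) = path_prob j h"
    unfolding path_event_def path_prob_def
    using iid_family[unfolded iid_bd_family_def, rule_format, where m="\<lambda>i l. h l i", where F=I and ts=ts and k=j, OF I ts_0] by simp
  then show ?thesis
    using emeasure_eq_measure by simp
qed

lemma exceeds_from_sets: "exceeds_from j \<in> sets M"
proof -
  have "exceeds_from j = (\<Union>l\<in>{j..K}. {\<omega>\<in>space M. mass_ratio I J (\<lambda>i. N i (ts l) \<omega>) > c})"
    unfolding exceeds_from_def by auto
  also have "\<dots> \<in> sets M"
    using ts_nonneg by (intro sets.finite_UN sets_Collect_mass_ratio[OF I J]) auto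
  finally show ?thesis .
qed

lemma path_prob_nonneg: "j \<le> K \<Longrightarrow> path_prob j h \<ge> 0"
  unfolding path_prob_def
  by (intro prod_nonneg mult_nonneg_nonneg p_nonneg) (auto simp: less_imp_le[OF ts_less])

lemma path_prob_Suc:
  "path_prob (Suc j) (h(Suc j := v)) = path_prob j h * (\<Prod>i\<in>I. p (ts (Suc j) - ts j) (h j i) (v i))"
proof -
  have "(\<Prod>l<j. p (ts (Suc l) - ts l) ((h(Suc j := v)) l i) ((h(Suc j := v)) (Suc l) i))
      = (\<Prod>l<j. p (ts (Suc l) - ts l) (h l i) (h (Suc l) i))" for i
    by (rule prod.cong) auto
  then show ?thesis
    unfolding path_prob_def prod.distrib[symmetric] by (simp add: mult.assoc)
qed

lemma mass_ratio_on_path_event: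
  "\<omega> \<in> path_event j h \<Longrightarrow> l \<le> j \<Longrightarrow> mass_ratio I J (\<lambda>i. N i (ts l) \<omega>) = mass_ratio I J (h l)"
  unfolding path_event_def by (intro mass_ratio_cong[OF J]) auto

lemma path_event_exceeds_from_eq_UN:
  assumes "j < K" and "\<not> mass_ratio I J (h j) > c"
  shows "path_event j h \<inter> exceeds_from j
    = (\<Union>v\<in>PiE I (\<lambda>_. UNIV). path_event (Suc j) (h(Suc j := v)) \<inter> exceeds_from (Suc j))"
proof safe
  fix \<omega> assume path: "\<omega> \<in> path_event j h" and exceeds: "\<omega> \<in> exceeds_from j"
  define v where "v = restrict (\<lambda>i. N i (ts (Suc j)) \<omega>) I"
  obtain l where l: "l \<in> {j..K}" "mass_ratio I J (\<lambda>i. N i (ts l) \<omega>) > c"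
    using exceeds unfolding exceeds_from_def by auto
  have "l \<noteq> j" using mass_ratio_on_path_event[OF path, of j] l assms(2) by auto
  then have "\<omega> \<in> exceeds_from (Suc j)" using l exceeds unfolding exceeds_from_def by auto
  moreover have "\<omega> \<in> path_event (Suc j) (h(Suc j := v))"
    using path unfolding path_event_def v_def by (auto simp: le_Suc_eq)
  moreover have "v \<in> PiE I (\<lambda>_. UNIV)" unfolding v_def by simp
  ultimately show "\<omega> \<in> (\<Union>v\<in>PiE I (\<lambda>_. UNIV). path_event (Suc j) (h(Suc j := v)) \<inter> exceeds_from (Suc j))"
    by blast
qed (auto simp: path_event_def exceeds_from_def)

lemma emeasure_path_event_exceeds_from:
  assumes "j < K" and "\<not> mass_ratio I J (h j) > c"
  shows "emeasure M (path_event j h \<inter> exceeds_from j)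
    = (\<integral>\<^sup>+v. emeasure M (path_event (Suc j) (h(Suc j := v)) \<inter> exceeds_from (Suc j)) \<partial>count_space (PiE I (\<lambda>_. UNIV)))"
  unfolding path_event_exceeds_from_eq_UN[of j h, OF assms]
proof (rule emeasure_UN_countable)
  show "disjoint_family_on (\<lambda>v. path_event (Suc j) (h(Suc j := v)) \<inter> exceeds_from (Suc j)) (PiE I (\<lambda>_. UNIV))"
    unfolding disjoint_family_on_def
  proof (intro ballI impI)
    fix v v' :: "'v \<Rightarrow> nat" assume "v \<in> PiE I (\<lambda>_. UNIV)" "v' \<in> PiE I (\<lambda>_. UNIV)" "v \<noteq> v'"
    then obtain i where "i \<in> I" "v i \<noteq> v' i" by (metis PiE_ext)
    then show "path_event (Suc j) (h(Suc j := v)) \<inter> exceeds_from (Suc j)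
        \<inter> (path_event (Suc j) (h(Suc j := v')) \<inter> exceeds_from (Suc j)) = {}"
      unfolding path_event_def by fastforce
  qed
  show "countable (PiE I (\<lambda>_. UNIV :: nat set))" using I(1) by (simp add: countable_PiE)
qed (use assms path_event_sets exceeds_from_sets in auto)

lemma emeasure_path_event_exceeds_from_le_of_gt:
  assumes "j \<le> K" "mass_ratio I J (h j) > c"
  shows "emeasure M (path_event j h \<inter> exceeds_from j) \<le> ennreal (path_prob j h * mass_ratio I J (h j) / c)"
proof -
  have "emeasure M (path_event j h \<inter> exceeds_from j) \<le> emeasure M (path_event j h)"
    using path_event_sets[OF assms(1)] by (intro emeasure_mono) auto
  also have "\<dots> = ennreal (path_prob j h)" by (rule emeasure_path_event[OF assms(1)])
  also have "path_prob j h \<le> path_prob j h * mass_ratio I J (h j) / c"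
    using assms c_pos path_prob_nonneg[OF assms(1), of h] by (simp add: le_divide_eq mult_left_mono)
  finally show ?thesis by (simp add: ennreal_leI)
qed

lemma ennreal_path_prob_Suc_mass_ratio:
  assumes "j < K"
  shows "ennreal (path_prob (Suc j) (h(Suc j := v)) * mass_ratio I J v / c)
    = ennreal (path_prob j h / c) * ((\<Prod>i\<in>I. ennp (ts (Suc j) - ts j) (h j i) (v i)) * ennreal (mass_ratio I J v))"
proof -
  define \<Delta> where "\<Delta> = ts (Suc j) - ts j"
  have "\<Delta> \<ge> 0" unfolding \<Delta>_def using ts_less[OF assms] by simp
  have nonneg: "0 \<le> path_prob j h / c" "0 \<le> (\<Prod>i\<in>I. p \<Delta> (h j i) (v i))" "0 \<le> mass_ratio I J v"
    using path_prob_nonneg[of j h] assms c_pos p_nonneg[OF \<open>\<Delta> \<ge> 0\<close>] mass_ratio_nonneg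
    by (auto intro: prod_nonneg)
  have "(\<Prod>i\<in>I. ennp \<Delta> (h j i) (v i)) = ennreal (\<Prod>i\<in>I. p \<Delta> (h j i) (v i))"
    using p_nonneg[OF \<open>\<Delta> \<ge> 0\<close>] by (simp add: prod_ennreal)
  moreover have "path_prob (Suc j) (h(Suc j := v)) * mass_ratio I J v / c
      = path_prob j h / c * ((\<Prod>i\<in>I. p \<Delta> (h j i) (v i)) * mass_ratio I J v)"
    unfolding path_prob_Suc \<Delta>_def by simp
  ultimately show ?thesis
    using nonneg unfolding \<Delta>_def by (simp only: ennreal_mult mult_nonneg_nonneg)
qed

text \<open>The supermartingale step of optional stopping: below the level \<open>c\<close>, the bound at time
  \<open>ts (Suc j)\<close> propagates to time \<open>ts j\<close> by \<open>expected_mass_ratio_le\<close>.\<close>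
lemma emeasure_path_event_exceeds_from_step:
  assumes "j < K" "\<not> mass_ratio I J (h j) > c"
    and IH: "\<And>h'. emeasure M (path_event (Suc j) h' \<inter> exceeds_from (Suc j))
      \<le> ennreal (path_prob (Suc j) h' * mass_ratio I J (h' (Suc j)) / c)"
  shows "emeasure M (path_event j h \<inter> exceeds_from j) \<le> ennreal (path_prob j h * mass_ratio I J (h j) / c)"
proof -
  define \<Delta> where "\<Delta> = ts (Suc j) - ts j"
  have "\<Delta> \<ge> 0" unfolding \<Delta>_def using ts_less[OF assms(1)] by simp
  have "emeasure M (path_event j h \<inter> exceeds_from j)
      = (\<integral>\<^sup>+v. emeasure M (path_event (Suc j) (h(Suc j := v)) \<inter> exceeds_from (Suc j)) \<partial>count_space (PiE I (\<lambda>_. UNIV)))"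
    by (rule emeasure_path_event_exceeds_from[of j h, OF assms(1,2)])
  also have "\<dots> \<le> (\<integral>\<^sup>+v. ennreal (path_prob j h / c) * ((\<Prod>i\<in>I. ennp \<Delta> (h j i) (v i)) * ennreal (mass_ratio I J v))
      \<partial>count_space (PiE I (\<lambda>_. UNIV)))"
    using IH unfolding \<Delta>_def ennreal_path_prob_Suc_mass_ratio[OF assms(1), symmetric]
    by (intro nn_integral_mono) (metis fun_upd_same)
  also have "\<dots> \<le> ennreal (path_prob j h / c) * ennreal (mass_ratio I J (h j))"
    unfolding nn_integral_count_space_cmult
    by (intro mult_left_mono expected_mass_ratio_le I J \<open>\<Delta> \<ge> 0\<close>) simp
  also have "\<dots> = ennreal (path_prob j h * mass_ratio I J (h j) / c)"
    using path_prob_nonneg[of j h] assms(1) c_pos by (simp add: ennreal_mult'[symmetric])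
  finally show ?thesis .
qed

lemma emeasure_path_event_exceeds_from_le:
  assumes "j \<le> K"
  shows "emeasure M (path_event j h \<inter> exceeds_from j) \<le> ennreal (path_prob j h * mass_ratio I J (h j) / c)"
  using assms
proof (induction j arbitrary: h rule: inc_induct)
  case base
  show ?case
  proof (cases "mass_ratio I J (h K) > c")
    case False
    then have "path_event K h \<inter> exceeds_from K = {}"
      using mass_ratio_on_path_event[of _ K h K] unfolding exceeds_from_def by fastforce
    then show ?thesis by simp
  qed (simp add: emeasure_path_event_exceeds_from_le_of_gt)
next
  case (step j)
  then show ?case
    by (cases "mass_ratio I J (h j) > c")
       (simp_all add: emeasure_path_event_exceeds_from_le_of_gt emeasure_path_event_exceeds_from_step)
qed

lemma emeasure_exceeds_from_0_le: "emeasure M (exceeds_from 0) \<le> ennreal (real (card J) / (real (card I) * c))"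
proof -
  define h1 where "h1 = (\<lambda>(l::nat) (i::'v). 1::nat)"
  have start: "path_event 0 h1 \<in> sets M" by (rule path_event_sets) simp
  have "emeasure M (path_event 0 h1) = 1"
    unfolding emeasure_path_event[OF le0] path_prob_def h1_def by simp
  then have null: "emeasure M (space M - path_event 0 h1) = 0"
    using emeasure_compl[OF start] emeasure_space_1 by simp
  have "emeasure M (exceeds_from 0) \<le> emeasure M ((path_event 0 h1 \<inter> exceeds_from 0) \<union> (space M - path_event 0 h1))"
    using start exceeds_from_sets by (intro emeasure_mono) (auto simp: exceeds_from_def)
  also have "\<dots> \<le> emeasure M (path_event 0 h1 \<inter> exceeds_from 0) + emeasure M (space M - path_event 0 h1)"
    using start exceeds_from_sets by (intro emeasure_subadditive) auto
  also have "\<dots> \<le> ennreal (path_prob 0 h1 * mass_ratio I J (h1 0) / c)"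
    using emeasure_path_event_exceeds_from_le[of 0 h1] null by simp
  also have "path_prob 0 h1 * mass_ratio I J (h1 0) / c = real (card J) / (real (card I) * c)"
    unfolding path_prob_def h1_def using mass_ratio_const_1[OF I(1) J] by simp
  finally show ?thesis .
qed

end

definition capped_inverse :: "real \<Rightarrow> real" where
  "capped_inverse y = (if y \<le> 1 then 1 else 1 / y)"

lemma capped_inverse_nonneg: "capped_inverse y \<ge> 0"
  by (simp add: capped_inverse_def)

lemma capped_inverse_antimono: "0 \<le> x \<Longrightarrow> x \<le> y \<Longrightarrow> capped_inverse y \<le> capped_inverse x"
  by (auto simp: capped_inverse_def frac_le divide_le_eq_1)

lemma capped_inverse_tendsto_0: "(capped_inverse \<longlongrightarrow> 0) at_top"
proof (rule Lim_transform_eventually)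
  show "((\<lambda>y::real. 1 / y) \<longlongrightarrow> 0) at_top"
    by (intro tendsto_divide_0[OF tendsto_const] filterlim_at_top_imp_at_infinity filterlim_ident)
  show "eventually (\<lambda>y. 1 / y = capped_inverse y) at_top"
    unfolding capped_inverse_def using eventually_gt_at_top[of 1] by eventually_elim auto
qed

context bd_family
begin

lemma finite_times_exceed_bound:
  assumes I: "finite I" "I \<subseteq> V" and J: "J \<subseteq> I" and c: "c > 0"
    and T: "finite T" "0 \<in> T" "T \<subseteq> {0..}"
  shows "emeasure M {\<omega>\<in>space M. \<exists>t\<in>T. mass_ratio I J (\<lambda>i. N i t \<omega>) > c}
    \<le> ennreal (real (card J) / (real (card I) * c))"
proof -
  define L where "L = sorted_list_of_set T"
  define K where "K = length L - 1"
  define ts where "ts l = L ! l" for l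
  have set_L: "set L = T" and sorted: "sorted_wrt (<) L"
    unfolding L_def using T by simp_all
  have length_L: "length L = Suc K" unfolding K_def using set_L T(2) by (cases L) auto
  have ts_less: "ts l < ts (Suc l)" if "l < K" for l
    unfolding ts_def using sorted_wrt_nth_less[OF sorted, of l "Suc l"] length_L that by simp
  have "ts 0 = 0"
  proof -
    obtain k where k: "k < length L" "L ! k = 0" using T(2) set_L by (metis in_set_conv_nth)
    have "L ! 0 \<le> L ! k"
      using sorted_wrt_nth_less[OF sorted, of 0 k] k by (cases "k = 0") auto
    moreover have "L ! 0 \<ge> 0" using T(3) set_L length_L by (metis atLeast_iff nth_mem subsetD zero_less_Suc)
    ultimately show ?thesis unfolding ts_def using k by simp
  qed
  interpret bd_grid r q p M V N I J ts K c
    by unfold_locales (use I J \<open>ts 0 = 0\<close> ts_less c in auto)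
  have "T = ts ` {0..K}" unfolding ts_def using set_L length_L
    by (auto simp: set_conv_nth less_Suc_eq_le)
  then have "{\<omega>\<in>space M. \<exists>t\<in>T. mass_ratio I J (\<lambda>i. N i t \<omega>) > c} = exceeds_from 0"
    unfolding exceeds_from_def by auto
  then show ?thesis using emeasure_exceeds_from_0_le by simp
qed

lemma countable_times_exceed_bound:
  assumes I: "finite I" "I \<subseteq> V" and J: "J \<subseteq> I" and c: "c > 0"
    and T: "countable T" "T \<subseteq> {0..}"
  shows "{\<omega>\<in>space M. \<exists>t\<in>T. mass_ratio I J (\<lambda>i. N i t \<omega>) > c} \<in> sets M"
    "emeasure M {\<omega>\<in>space M. \<exists>t\<in>T. mass_ratio I J (\<lambda>i. N i t \<omega>) > c}
      \<le> ennreal (real (card J) / (real (card I) * c))"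
proof -
  let ?E = "\<lambda>T. {\<omega>\<in>space M. \<exists>t\<in>T. mass_ratio I J (\<lambda>i. N i t \<omega>) > c}"
  have sets_E: "?E T' \<in> sets M" if "countable T'" "T' \<subseteq> {0..}" for T'
  proof -
    have "?E T' = (\<Union>t\<in>T'. {\<omega>\<in>space M. mass_ratio I J (\<lambda>i. N i t \<omega>) > c})" by auto
    also have "\<dots> \<in> sets M"
      using that by (intro sets.countable_UN'' sets_Collect_mass_ratio[OF I J]) auto
    finally show ?thesis .
  qed
  show "?E T \<in> sets M" using sets_E T .
  define F where "F n = insert 0 (from_nat_into (insert 0 T) ` {..<n})" for n
  have F: "finite (F n)" "0 \<in> F n" "F n \<subseteq> {0..}" for n
  proof -
    have "from_nat_into (insert 0 T) k \<ge> 0" for k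
      using from_nat_into[of "insert 0 T" k] T(2) by auto
    then show "finite (F n)" "0 \<in> F n" "F n \<subseteq> {0..}" unfolding F_def by auto
  qed
  have sets_F: "?E (F n) \<in> sets M" for n
    using F by (intro sets_E countable_finite)
  have "?E T \<subseteq> (\<Union>n. ?E (F n))"
  proof safe
    fix \<omega> t assume "\<omega> \<in> space M" "t \<in> T" "mass_ratio I J (\<lambda>i. N i t \<omega>) > c"
    moreover obtain k where "from_nat_into (insert 0 T) k = t"
      using from_nat_into_surj[of "insert 0 T" t] T(1) \<open>t \<in> T\<close> by auto
    ultimately show "\<omega> \<in> (\<Union>n. ?E (F n))" unfolding F_def by (intro UN_I[of "Suc k"]) auto
  qed
  then have "emeasure M (?E T) \<le> emeasure M (\<Union>n. ?E (F n))"
    using sets_F by (intro emeasure_mono) auto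
  also have "\<dots> = (SUP n. emeasure M (?E (F n)))"
    by (rule SUP_emeasure_incseq[symmetric])
       (use sets_F in \<open>auto simp: incseq_def F_def intro!: monoI\<close>)
  also have "\<dots> \<le> ennreal (real (card J) / (real (card I) * c))"
    using F by (intro SUP_least finite_times_exceed_bound[OF I J c]) auto
  finally show "emeasure M (?E T) \<le> ennreal (real (card J) / (real (card I) * c))" .
qed

lemma sup_bd_ratio_ge_subset:
  assumes I: "finite I" "I \<subseteq> V" and J: "J \<subseteq> I" and "c < x"
    and right_constant: "\<And>i \<omega> t. i \<in> V \<Longrightarrow> \<omega> \<in> space M \<Longrightarrow> t \<ge> 0 \<Longrightarrow>
          \<exists>\<epsilon>>0. \<forall>s. t \<le> s \<and> s < t + \<epsilon> \<longrightarrow> N i s \<omega> = N i t \<omega>"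
  shows "{\<omega>\<in>space M. (SUP t\<in>{0..}. bd_ratio N I J t \<omega>) \<ge> x}
    \<subseteq> {\<omega>\<in>space M. \<exists>t\<in>{s\<in>\<rat>. 0 \<le> s}. mass_ratio I J (\<lambda>i. N i t \<omega>) > c}"
proof safe
  fix \<omega> assume \<omega>: "\<omega> \<in> space M" and "(SUP t\<in>{0..}. bd_ratio N I J t \<omega>) \<ge> x"
  have bdd: "bdd_above ((\<lambda>t. bd_ratio N I J t \<omega>) ` {0..})"
    unfolding bd_ratio_eq_mass_ratio by (rule bdd_aboveI2, rule mass_ratio_le_1[OF I(1) J])
  have "c < (SUP t\<in>{0..}. bd_ratio N I J t \<omega>)" using \<open>c < x\<close> \<open>_ \<ge> x\<close> by linarith
  then obtain t where t: "t \<ge> 0" "bd_ratio N I J t \<omega> > c"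
    using less_cSUP_iff[OF _ bdd] by auto
  have "\<forall>i\<in>I. \<exists>\<epsilon>>0. \<forall>s. t \<le> s \<and> s < t + \<epsilon> \<longrightarrow> N i s \<omega> = N i t \<omega>"
    using I(2) \<omega> t(1) by (intro ballI right_constant) auto
  from bchoice[OF this] obtain e
    where "\<forall>i\<in>I. e i > 0 \<and> (\<forall>s. t \<le> s \<and> s < t + e i \<longrightarrow> N i s \<omega> = N i t \<omega>)"
    by blast
  then have e_pos: "\<And>i. i \<in> I \<Longrightarrow> e i > 0"
    and e_const: "\<And>i s. i \<in> I \<Longrightarrow> t \<le> s \<Longrightarrow> s < t + e i \<Longrightarrow> N i s \<omega> = N i t \<omega>"
    by blast+
  define \<epsilon> where "\<epsilon> = Min (insert 1 (e ` I))"
  have "\<epsilon> > 0" unfolding \<epsilon>_def using e_pos I(1) by (simp add: Min_gr_iff)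
  then obtain s where s: "s \<in> \<rat>" "t < s" "s < t + \<epsilon>" using Rats_dense_in_real[of t "t + \<epsilon>"] by auto
  have "N i s \<omega> = N i t \<omega>" if "i \<in> I" for i
  proof (rule e_const[OF that])
    have "\<epsilon> \<le> e i" unfolding \<epsilon>_def using I(1) that by simp
    then show "t \<le> s" "s < t + e i" using s by auto
  qed
  then have "mass_ratio I J (\<lambda>i. N i s \<omega>) = mass_ratio I J (\<lambda>i. N i t \<omega>)"
    by (intro mass_ratio_cong[OF J]) auto
  then show "\<exists>t\<in>{s\<in>\<rat>. 0 \<le> s}. mass_ratio I J (\<lambda>i. N i t \<omega>) > c"
    using t s unfolding bd_ratio_eq_mass_ratio by (intro bexI[of _ s]) auto
qed

lemma measure_sup_bd_ratio_ge_le: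
  assumes I: "finite I" "I \<subseteq> V" and J: "J \<subseteq> I" and "x > 0"
    and right_constant: "\<And>i \<omega> t. i \<in> V \<Longrightarrow> \<omega> \<in> space M \<Longrightarrow> t \<ge> 0 \<Longrightarrow>
          \<exists>\<epsilon>>0. \<forall>s. t \<le> s \<and> s < t + \<epsilon> \<longrightarrow> N i s \<omega> = N i t \<omega>"
  shows "measure M {\<omega>\<in>space M. (SUP t\<in>{0..}. bd_ratio N I J t \<omega>) \<ge> x} \<le> real (card J) / (real (card I) * x)"
proof -
  define m where "m = measure M {\<omega>\<in>space M. (SUP t\<in>{0..}. bd_ratio N I J t \<omega>) \<ge> x}"
  define g where "g = real (card J) / real (card I)"
  have "g \<ge> 0" unfolding g_def by simp
  have m_le: "m \<le> g / c" if "0 < c" "c < x" for c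
  proof -
    let ?B = "{\<omega>\<in>space M. \<exists>t\<in>{s\<in>\<rat>. 0 \<le> s}. mass_ratio I J (\<lambda>i. N i t \<omega>) > c}"
    have "countable {s\<in>\<rat>. 0 \<le> (s::real)}" "{s\<in>\<rat>. 0 \<le> (s::real)} \<subseteq> {0..}"
      by (auto intro: countable_subset[OF _ countable_rat])
    note B = countable_times_exceed_bound[OF I J \<open>0 < c\<close> this]
    have "m \<le> measure M ?B"
      unfolding m_def using B(1) sup_bd_ratio_ge_subset[OF I J \<open>c < x\<close> right_constant]
      by (intro finite_measure_mono) auto
    also have "measure M ?B \<le> g / c"
      using B(2) that \<open>g \<ge> 0\<close> unfolding g_def by (simp add: emeasure_eq_measure ennreal_le_iff field_simps)
    finally show ?thesis .
  qed
  have "m \<le> g / x"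
  proof (cases "m > 0")
    case True
    have "x \<le> g / m"
    proof (rule dense_le_bounded[OF \<open>x > 0\<close>])
      fix c assume "0 < c" "c < x"
      then show "c \<le> g / m" using m_le[of c] True by (simp add: field_simps)
    qed
    then show ?thesis using True \<open>x > 0\<close> by (simp add: field_simps)
  qed (use divide_nonneg_pos[OF \<open>g \<ge> 0\<close> \<open>x > 0\<close>] in linarith)
  then show ?thesis unfolding m_def g_def by (simp add: field_simps)
qed

lemma measure_sup_bd_ratio_ge_le_capped_inverse:
  assumes "finite I" "I \<subseteq> V" "J \<subseteq> I" "J \<noteq> {}" "x \<ge> 0"
    and "\<And>i \<omega> t. i \<in> V \<Longrightarrow> \<omega> \<in> space M \<Longrightarrow> t \<ge> 0 \<Longrightarrow>
          \<exists>\<epsilon>>0. \<forall>s. t \<le> s \<and> s < t + \<epsilon> \<longrightarrow> N i s \<omega> = N i t \<omega>"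
  shows "measure M {\<omega>\<in>space M. (SUP t\<in>{0..}. bd_ratio N I J t \<omega>) \<ge> x}
    \<le> capped_inverse (real (card I) / real (card J) * x)"
proof (cases "real (card I) / real (card J) * x \<le> 1")
  case False
  then have "x > 0" using \<open>x \<ge> 0\<close> by (cases "x = 0") auto
  have "card J > 0" using assms(1,3,4) by (meson card_gt_0_iff finite_subset)
  from measure_sup_bd_ratio_ge_le[OF assms(1-3) \<open>x > 0\<close> assms(6)] False \<open>card J > 0\<close> show ?thesis
    by (simp add: capped_inverse_def field_simps)
qed (simp add: capped_inverse_def)

end

theorem mainTheorem16:
  fixes M :: "'w measure" and V :: "'v set" and N :: "'v \<Rightarrow> real \<Rightarrow> 'w \<Rightarrow> nat"
    and r q :: real and p :: "real \<Rightarrow> nat \<Rightarrow> nat \<Rightarrow> real"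
  assumes "prob_space M"
    and "countable V"
    and "0 \<le> q" and "q < r"
    and "is_bd_transition r q p"
    and meas: "\<And>i t. i \<in> V \<Longrightarrow> t \<ge> 0 \<Longrightarrow> N i t \<in> measurable M (count_space UNIV)"
    and rcont: "\<And>i \<omega> t. i \<in> V \<Longrightarrow> \<omega> \<in> space M \<Longrightarrow> t \<ge> 0 \<Longrightarrow>
                  \<exists>\<epsilon>>0. \<forall>s. t \<le> s \<and> s < t + \<epsilon> \<longrightarrow> N i s \<omega> = N i t \<omega>"
    and "iid_bd_family M V N p"
  shows "\<exists>\<delta>>0. \<exists>G :: real \<Rightarrow> real.
           (\<forall>y\<ge>0. G y \<ge> 0) \<and>
           (\<forall>x y. 0 \<le> x \<longrightarrow> x \<le> y \<longrightarrow> G y \<le> G x) \<and>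
           (G \<longlongrightarrow> 0) at_top \<and>
           (\<forall>I J x. finite I \<longrightarrow> I \<subseteq> V \<longrightarrow> J \<subseteq> I \<longrightarrow> J \<noteq> {} \<longrightarrow> x \<ge> 0 \<longrightarrow>
              measure M {\<omega>\<in>space M. (SUP t\<in>{0..}. bd_ratio N I J t \<omega>) \<ge> x}
                \<le> G (real (card I) / real (card J) * x) + exp (- 2 * \<delta> * real (card I)))"
proof -
  interpret bd_family r q p M V N
    by (intro bd_family.intro bd_family_axioms.intro bd_transition.intro) (use assms in auto)
  have "measure M {\<omega>\<in>space M. (SUP t\<in>{0..}. bd_ratio N I J t \<omega>) \<ge> x}
      \<le> capped_inverse (real (card I) / real (card J) * x) + exp (- 2 * 1 * real (card I))"
    if "finite I" "I \<subseteq> V" "J \<subseteq> I" "J \<noteq> {}" "x \<ge> 0" for I J x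
    using measure_sup_bd_ratio_ge_le_capped_inverse[OF that rcont] by (intro add_increasing2) auto
  then show ?thesis
    using capped_inverse_nonneg capped_inverse_antimono capped_inverse_tendsto_0
    by (intro exI[of _ 1] conjI exI[of _ capped_inverse]) auto
qed

end
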